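(* For each $f\in\Bbbk[x]$ and $\lambda\in\Bbbk^\times$ there is a unique algebra automorphism $\phi_{f,\lambda}:A\to A$ with $\phi_{f,\lambda}(x)=\lambda x$ and $\phi_{f,\lambda}(y)=\lambda^{N-1}y+f$. Moreover, the map $(f,\lambda)\mapsto\phi_{f,\lambda}$ is an isomorphism of groups from $\Bbbk[x]\bowtie\Bbbk^\times$ onto the automorphism group $\mathrm{Aut}(A)$ (with composition as product).
   Context: Let $\Bbbk$ be a field of characteristic zero and $N\geq1$ an integer. Let $A=A_N$ be the $\Bbbk$-algebra generated by $x,y$ subject to the relation $yx-xy=x^N$. For $g\in\Bbbk[x]$ and $\lambda\in\Bbbk^\times$ write $g\cdot\lambda$ for the polynomial $g(\lambda x)$. The group $\Bbbk[x]\bowtie\Bbbk^\times$ has underlying set $\Bbbk[x]\times\Bbbk^\times$ and product $(f,\lambda)\cdot(g,\mu)=(\mu^{N-1}f+g\cdot\lambda,\ \lambda\mu)$. *)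

theory Defs
  imports "HOL-Library.Poly_Mapping" "HOL-Computational_Algebra.Polynomial" "HOL-Algebra.Bij"
begin

text \<open>Words in the two letters x (encoded False) and y (encoded True); concatenation is the
monoid operation. The free associative algebra k<x,y> is the monoid algebra of words,
realised as finitely supported functions from words to k with convolution product.\<close>

datatype word = W "bool list"

instantiation word :: monoid_add
begin
definition zero_word :: word where "zero_word = W []"
fun plus_word :: "word \<Rightarrow> word \<Rightarrow> word" where "plus_word (W u) (W v) = W (u @ v)"
instance
proof
  fix a b c :: word
  show "a + b + c = a + (b + c)" by (cases a; cases b; cases c) simp
  show "0 + a = a" by (cases a) (simp add: zero_word_def)
  show "a + 0 = a" by (cases a) (simp add: zero_word_def)
qed
end

type_synonym 'k free_alg = "word \<Rightarrow>\<^sub>0 'k"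

definition fx :: "'k::comm_ring_1 free_alg" where "fx = Poly_Mapping.single (W [False]) 1"
definition fy :: "'k::comm_ring_1 free_alg" where "fy = Poly_Mapping.single (W [True]) 1"

definition fscal :: "'k::comm_ring_1 \<Rightarrow> 'k free_alg" where
  "fscal c = Poly_Mapping.single (W []) c"

definition fpoly :: "'k::comm_ring_1 poly \<Rightarrow> 'k free_alg" where
  "fpoly g = (\<Sum>i\<le>degree g. fscal (coeff g i) * fx ^ i)"

definition relator :: "nat \<Rightarrow> 'k::comm_ring_1 free_alg" where
  "relator N = fy * fx - fx * fy - fx ^ N"

inductive_set rel_ideal :: "nat \<Rightarrow> 'k::comm_ring_1 free_alg set" for N where
  gen: "a * relator N * b \<in> rel_ideal N"
| zero: "0 \<in> rel_ideal N"
| add: "p \<in> rel_ideal N \<Longrightarrow> q \<in> rel_ideal N \<Longrightarrow> p + q \<in> rel_ideal N"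

definition cls :: "nat \<Rightarrow> 'k::comm_ring_1 free_alg \<Rightarrow> 'k free_alg set" where
  "cls N p = {q. q - p \<in> rel_ideal N}"

definition A :: "nat \<Rightarrow> 'k::comm_ring_1 free_alg set set" where
  "A N = range (cls N)"

definition rep :: "'k::comm_ring_1 free_alg set \<Rightarrow> 'k free_alg" where
  "rep P = (SOME p. p \<in> P)"

definition A_add :: "nat \<Rightarrow> 'k::comm_ring_1 free_alg set \<Rightarrow> 'k free_alg set \<Rightarrow> 'k free_alg set" where
  "A_add N P Q = cls N (rep P + rep Q)"
definition A_mult :: "nat \<Rightarrow> 'k::comm_ring_1 free_alg set \<Rightarrow> 'k free_alg set \<Rightarrow> 'k free_alg set" where
  "A_mult N P Q = cls N (rep P * rep Q)"
definition A_scale :: "nat \<Rightarrow> 'k::comm_ring_1 \<Rightarrow> 'k free_alg set \<Rightarrow> 'k free_alg set" where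
  "A_scale N c P = cls N (fscal c * rep P)"
definition A_one :: "nat \<Rightarrow> 'k::comm_ring_1 free_alg set" where
  "A_one N = cls N 1"
definition A_x :: "nat \<Rightarrow> 'k::comm_ring_1 free_alg set" where
  "A_x N = cls N fx"
definition A_y :: "nat \<Rightarrow> 'k::comm_ring_1 free_alg set" where
  "A_y N = cls N fy"
definition A_poly :: "nat \<Rightarrow> 'k::comm_ring_1 poly \<Rightarrow> 'k free_alg set" where
  "A_poly N g = cls N (fpoly g)"

text \<open>A k-algebra automorphism of A_N: a bijection of A_N onto itself (extensional, i.e.
undefined outside A_N, so that it is a genuine element of the group) which is additive,
multiplicative, k-linear and unital.\<close>
definition is_alg_aut :: "nat \<Rightarrow> ('k::comm_ring_1 free_alg set \<Rightarrow> 'k free_alg set) \<Rightarrow> bool" where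
  "is_alg_aut N \<phi> \<longleftrightarrow> \<phi> \<in> Bij (A N)
     \<and> (\<forall>P\<in>A N. \<forall>Q\<in>A N. \<phi> (A_add N P Q) = A_add N (\<phi> P) (\<phi> Q))
     \<and> (\<forall>P\<in>A N. \<forall>Q\<in>A N. \<phi> (A_mult N P Q) = A_mult N (\<phi> P) (\<phi> Q))
     \<and> (\<forall>c. \<forall>P\<in>A N. \<phi> (A_scale N c P) = A_scale N c (\<phi> P))
     \<and> \<phi> (A_one N) = A_one N"

definition Aut_group :: "nat \<Rightarrow> ('k::comm_ring_1 free_alg set \<Rightarrow> 'k free_alg set) monoid" where
  "Aut_group N = BijGroup (A N) \<lparr>carrier := {\<phi>. is_alg_aut N \<phi>}\<rparr>"

definition is_phi :: "nat \<Rightarrow> 'k::comm_ring_1 poly \<Rightarrow> 'k \<Rightarrow> ('k free_alg set \<Rightarrow> 'k free_alg set) \<Rightarrow> bool" where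
  "is_phi N f l \<phi> \<longleftrightarrow> is_alg_aut N \<phi>
     \<and> \<phi> (A_x N) = A_scale N l (A_x N)
     \<and> \<phi> (A_y N) = A_add N (A_scale N (l ^ (N - 1)) (A_y N)) (A_poly N f)"

definition phi :: "nat \<Rightarrow> 'k::comm_ring_1 poly \<Rightarrow> 'k \<Rightarrow> ('k free_alg set \<Rightarrow> 'k free_alg set)" where
  "phi N f l = (THE \<phi>. is_phi N f l \<phi>)"

definition bowtie :: "nat \<Rightarrow> ('k::field poly \<times> 'k) monoid" where
  "bowtie N = \<lparr>carrier = {(f, l). l \<noteq> 0},
     mult = (\<lambda>(f, l) (g, m). (smult (m ^ (N - 1)) f + pcompose g [:0, l:], l * m)),
     one = (0, 1)\<rparr>"

end

theory Submission
  imports Defs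
begin

text \<open>Every class in \<open>A\<^sub>N\<close> has a unique representative \<open>\<Sum>\<^sub>j a\<^sub>j(x) y\<^sup>j\<close>, so \<open>A\<^sub>N\<close> is
\<open>\<Bbbk>[x][y]\<close> with a twisted product in which \<open>y a(x) = a(x) y + x\<^sup>N a'(x)\<close>.
Let \<open>\<sigma>\<close> be an automorphism. If \<open>\<sigma>(x)\<close> had positive \<open>y\<close>-degree, the iterated commutators
\<open>[\<sigma>(x), [\<sigma>(x), \<dots>, x]]\<close> would never vanish: their leading coefficients gain an
\<open>x\<close>-degree faster than their \<open>y\<close>-degree drops. But \<open>[x, -]\<close> is locally nilpotent, and
\<open>\<sigma>\<close> maps the iterated commutators with \<open>x\<close> to those with \<open>\<sigma>(x)\<close>. Hence \<open>\<sigma>(x) \<in> \<Bbbk>[x]\<close>, the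
same holds for \<open>\<sigma>\<^sup>-\<^sup>1\<close>, and so \<open>\<sigma>(x) = \<lambda>x + c\<close>. Applying \<open>\<sigma>\<close> to \<open>[y, x] = x\<^sup>N\<close> and comparing
the two top \<open>y\<close>-coefficients forces \<open>\<sigma>(y)\<close> to be linear in \<open>y\<close> with leading coefficient
\<open>\<lambda>\<^sup>N\<^sup>-\<^sup>1\<close>, and \<open>c = 0\<close>.

Conversely the substitution \<open>x \<mapsto> \<lambda>x\<close>, \<open>y \<mapsto> \<lambda>\<^sup>N\<^sup>-\<^sup>1y + f\<close> of the free algebra maps the
relator to \<open>\<lambda>\<^sup>N\<close> times itself, so it descends to \<open>A\<^sub>N\<close>; these substitutions compose
according to the product of \<open>\<Bbbk>[x] \<bowtie> \<Bbbk>\<^sup>\<times>\<close>, which makes them automorphisms and the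
assignment a homomorphism. An automorphism is determined by the images of
\<open>x\<close> and \<open>y\<close>, which gives uniqueness and injectivity.\<close>

section \<open>The free algebra\<close>

lemma poly_mapping_single_induct [case_names zero single]:
  fixes P :: "('a \<Rightarrow>\<^sub>0 'b::monoid_add) \<Rightarrow> bool"
  assumes "P 0" "\<And>w c p. P p \<Longrightarrow> P (Poly_Mapping.single w c + p)"
  shows "P p"
proof (induction p rule: update_induct)
  case const then show ?case using assms(1) .
next
  case (update f a b)
  have "Poly_Mapping.update a b f = Poly_Mapping.single a b + f"
    using update(1)
    by (intro poly_mapping_eqI) (auto simp: lookup_update lookup_add lookup_single in_keys_iff when_def)
  then show ?case using assms(2) update by simp
qed

lemma W_Nil_eq_0: "W [] = 0"
  by (simp add: zero_word_def)

lemma one_free_alg_eq_single: "(1::'k::comm_ring_1 free_alg) = Poly_Mapping.single (W []) 1"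
  by (simp add: W_Nil_eq_0 single_one)

lemma fscal_eq_single: "fscal c = Poly_Mapping.single 0 c"
  by (simp add: fscal_def W_Nil_eq_0)

lemma fscal_mult: "fscal a * fscal b = fscal (a * b)"
  by (simp add: fscal_eq_single mult_single)

lemma fscal_add: "fscal a + fscal b = fscal (a + b)"
  by (simp add: fscal_eq_single single_add)

lemma fscal_0 [simp]: "fscal 0 = 0"
  by (simp add: fscal_eq_single)

lemma fscal_1 [simp]: "fscal 1 = 1"
  by (simp add: fscal_eq_single one_poly_mapping.abs_eq single.abs_eq)

lemma fscal_commute: "fscal c * p = p * fscal c"
proof (induction p rule: poly_mapping_single_induct)
  case zero then show ?case by simp
next
  case (single w d p)
  then show ?case
    by (simp add: distrib_left distrib_right fscal_eq_single mult_single mult.commute)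
qed

lemma mult_fscal_left: "p * (fscal c * q) = fscal c * (p * q)"
  by (metis fscal_commute mult.assoc)

lemma fscal_mult_mult: "fscal c * p * (fscal d * q) = fscal (c * d) * (p * q)"
  by (metis fscal_commute fscal_mult mult.assoc)

lemma fscal_mult_fscal_mult: "fscal a * (fscal b * p) = fscal (a * b) * p"
  by (simp add: mult.assoc[symmetric] fscal_mult)

lemma fscal_mult_single: "fscal c * Poly_Mapping.single w d = Poly_Mapping.single w (c * d)"
  by (simp add: fscal_eq_single mult_single)

lemma single_eq_fscal_mult: "Poly_Mapping.single w c = fscal c * Poly_Mapping.single w 1"
  by (simp add: fscal_mult_single)

lemma power_fscal_mult: "(fscal c * p) ^ n = fscal (c ^ n) * p ^ n"
proof (induction n)
  case 0 then show ?case by simp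
next
  case (Suc n)
  have "(fscal c * p) ^ Suc n = fscal c * p * (fscal (c ^ n) * p ^ n)" by (simp add: Suc)
  then show ?case by (simp add: fscal_mult_mult)
qed

definition letter :: "bool \<Rightarrow> 'k::comm_ring_1 free_alg" where
  "letter b = (if b then fy else fx)"

lemma single_Cons_word:
  "Poly_Mapping.single (W (b # bs)) (1::'k::comm_ring_1) = letter b * Poly_Mapping.single (W bs) 1"
  by (simp add: letter_def fx_def fy_def mult_single)

lemma fpoly_eq_sum_lessThan:
  assumes "degree p < M"
  shows "fpoly p = (\<Sum>i<M. fscal (coeff p i) * fx ^ i)"
  unfolding fpoly_def using assms
  by (intro sum.mono_neutral_left) (auto simp: coeff_eq_0)

lemma fpoly_0 [simp]: "fpoly 0 = 0"
  by (simp add: fpoly_def)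

lemma fscal_mult_fx_mult: "fscal c * (fx * q) = fx * (fscal c * q)"
  by (metis fscal_commute mult.assoc)

lemma fpoly_pCons: "fpoly (pCons a p) = fscal a + fx * fpoly p"
proof -
  let ?M = "Suc (degree p)"
  have "fpoly (pCons a p) = (\<Sum>i<Suc ?M. fscal (coeff (pCons a p) i) * fx ^ i)"
    by (rule fpoly_eq_sum_lessThan) (simp add: degree_pCons_le le_imp_less_Suc)
  also have "\<dots> = fscal a + (\<Sum>i<?M. fscal (coeff p i) * fx ^ Suc i)"
    by (subst sum.lessThan_Suc_shift) simp
  also have "(\<Sum>i<?M. fscal (coeff p i) * fx ^ Suc i) = fx * (\<Sum>i<?M. fscal (coeff p i) * fx ^ i)"
    by (simp only: sum_distrib_left power_Suc fscal_mult_fx_mult)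
  also have "(\<Sum>i<?M. fscal (coeff p i) * fx ^ i) = fpoly p"
    by (rule fpoly_eq_sum_lessThan[symmetric]) simp
  finally show ?thesis .
qed

lemma fpoly_add: "fpoly (p + q) = fpoly p + fpoly q"
  by (induction p q rule: poly_induct2) (simp_all add: fpoly_pCons fscal_add[symmetric] algebra_simps)

lemma fpoly_smult: "fpoly (smult c p) = fscal c * fpoly p"
  by (induction p) (simp_all add: fpoly_pCons distrib_left fscal_mult_fx_mult flip: fscal_mult)

lemma fpoly_const [simp]: "fpoly [:a:] = fscal a"
  using fpoly_pCons[of a 0] by simp

lemma fpoly_1 [simp]: "fpoly 1 = 1"
  by (simp add: one_pCons)

lemma fpoly_mult: "fpoly (p * q) = fpoly p * fpoly q"
  by (induction p) (simp_all add: fpoly_pCons fpoly_add fpoly_smult algebra_simps)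

lemma fpoly_x [simp]: "fpoly [:0, 1:] = fx"
  by (simp add: fpoly_pCons)

lemma fpoly_linear: "fpoly [:0, l:] = fscal l * fx"
  by (simp add: fpoly_pCons fscal_commute)

lemma fpoly_power: "fpoly (p ^ n) = fpoly p ^ n"
  by (induction n) (simp_all add: fpoly_mult)

lemma fpoly_mult_fx: "fpoly p * fx = fx * fpoly p"
  by (metis fpoly_mult fpoly_x mult.commute)

lemma fx_power_mult_fpoly: "fx ^ n * fpoly p = fpoly p * fx ^ n"
  by (metis fpoly_mult fpoly_x fpoly_power mult.commute)

section \<open>The relation ideal and the quotient\<close>

lemma rel_ideal_uminus: "p \<in> rel_ideal N \<Longrightarrow> - p \<in> rel_ideal N"
proof (induction rule: rel_ideal.induct)
  case (gen a b)
  have "- (a * relator N * b) = (- a) * relator N * b" by simp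
  then show ?case by (metis rel_ideal.gen)
next
  case zero then show ?case by (simp add: rel_ideal.zero)
next
  case (add p q)
  then show ?case using rel_ideal.add[OF add.IH] by (metis minus_add_distrib)
qed

lemma rel_ideal_mult_left: "p \<in> rel_ideal N \<Longrightarrow> c * p \<in> rel_ideal N"
proof (induction rule: rel_ideal.induct)
  case (gen a b)
  have "c * (a * relator N * b) = (c * a) * relator N * b" by (simp add: mult.assoc)
  then show ?case by (metis rel_ideal.gen)
next
  case zero then show ?case by (simp add: rel_ideal.zero)
next
  case (add p q) then show ?case by (simp add: rel_ideal.add distrib_left)
qed

lemma rel_ideal_mult_right: "p \<in> rel_ideal N \<Longrightarrow> p * c \<in> rel_ideal N"
proof (induction rule: rel_ideal.induct)
  case (gen a b)
  have "(a * relator N * b) * c = a * relator N * (b * c)" by (simp add: mult.assoc)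
  then show ?case by (metis rel_ideal.gen)
next
  case zero then show ?case by (simp add: rel_ideal.zero)
next
  case (add p q) then show ?case by (simp add: rel_ideal.add distrib_right)
qed

lemma relator_in_rel_ideal: "relator N \<in> rel_ideal N"
  using rel_ideal.gen[of 1 N 1] by simp

definition rel_equiv :: "nat \<Rightarrow> 'k::comm_ring_1 free_alg \<Rightarrow> 'k free_alg \<Rightarrow> bool" where
  "rel_equiv N p q \<longleftrightarrow> p - q \<in> rel_ideal N"

lemma rel_equiv_refl [simp]: "rel_equiv N p p"
  by (simp add: rel_equiv_def rel_ideal.zero)

lemma rel_equiv_sym: "rel_equiv N p q \<Longrightarrow> rel_equiv N q p"
  unfolding rel_equiv_def by (metis rel_ideal_uminus minus_diff_eq)

lemma rel_equiv_trans: "rel_equiv N p q \<Longrightarrow> rel_equiv N q r \<Longrightarrow> rel_equiv N p r"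
  unfolding rel_equiv_def by (metis rel_ideal.add diff_add_cancel add_diff_eq)

lemma rel_equiv_add: "rel_equiv N p q \<Longrightarrow> rel_equiv N p' q' \<Longrightarrow> rel_equiv N (p + p') (q + q')"
proof -
  assume "rel_equiv N p q" "rel_equiv N p' q'"
  moreover have "p + p' - (q + q') = (p - q) + (p' - q')" by simp
  ultimately show ?thesis unfolding rel_equiv_def by (metis rel_ideal.add)
qed

lemma rel_equiv_mult: "rel_equiv N p q \<Longrightarrow> rel_equiv N p' q' \<Longrightarrow> rel_equiv N (p * p') (q * q')"
proof -
  assume "rel_equiv N p q" "rel_equiv N p' q'"
  moreover have "p * p' - q * q' = (p - q) * p' + q * (p' - q')" by (simp add: algebra_simps)
  ultimately show ?thesis
    unfolding rel_equiv_def by (metis rel_ideal_mult_left rel_ideal_mult_right rel_ideal.add)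
qed

lemma rel_equiv_relator: "rel_equiv N (fy * fx) (fx * fy + fx ^ N)"
  using relator_in_rel_ideal[of N] unfolding rel_equiv_def relator_def by (simp add: algebra_simps)

lemma cls_eq_iff: "cls N p = cls N q \<longleftrightarrow> rel_equiv N p q"
proof
  assume "cls N p = cls N q"
  moreover have "p \<in> cls N p" by (simp add: cls_def rel_ideal.zero)
  ultimately show "rel_equiv N p q" by (simp add: cls_def rel_equiv_def)
next
  assume "rel_equiv N p q"
  then show "cls N p = cls N q"
    unfolding cls_def by (auto intro: rel_equiv_trans rel_equiv_sym simp: rel_equiv_def[symmetric])
qed

lemma rel_equiv_rep_cls: "rel_equiv N (rep (cls N p)) p"
proof -
  have "p \<in> cls N p" by (simp add: cls_def rel_ideal.zero)
  then have "rep (cls N p) \<in> cls N p" unfolding rep_def by (rule someI)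
  then show ?thesis by (simp add: cls_def rel_equiv_def)
qed

lemma A_add_cls: "A_add N (cls N p) (cls N q) = cls N (p + q)"
  unfolding A_add_def cls_eq_iff by (intro rel_equiv_add rel_equiv_rep_cls)

lemma A_mult_cls: "A_mult N (cls N p) (cls N q) = cls N (p * q)"
  unfolding A_mult_def cls_eq_iff by (intro rel_equiv_mult rel_equiv_rep_cls)

lemma A_scale_cls: "A_scale N c (cls N p) = cls N (fscal c * p)"
  unfolding A_scale_def cls_eq_iff by (intro rel_equiv_mult rel_equiv_rep_cls rel_equiv_refl)

lemma cls_in_A [simp]: "cls N p \<in> A N"
  by (simp add: A_def)

lemma A_cases: "P \<in> A N \<Longrightarrow> (\<And>p. P = cls N p \<Longrightarrow> thesis) \<Longrightarrow> thesis"
  by (auto simp: A_def)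

lemma A_add_in_A [simp]: "A_add N P Q \<in> A N" by (simp add: A_add_def)
lemma A_scale_in_A [simp]: "A_scale N c P \<in> A N" by (simp add: A_scale_def)
lemma A_one_in_A [simp]: "A_one N \<in> A N" by (simp add: A_one_def)
lemma A_x_in_A [simp]: "A_x N \<in> A N" by (simp add: A_x_def)
lemma A_y_in_A [simp]: "A_y N \<in> A N" by (simp add: A_y_def)
section \<open>Linear extension from words\<close>

definition lin_ext :: "('k::comm_ring_1 \<Rightarrow> 'b \<Rightarrow> 'b) \<Rightarrow> (word \<Rightarrow> 'b) \<Rightarrow> 'k free_alg \<Rightarrow> 'b::comm_monoid_add"
  where "lin_ext sc g p = (\<Sum>w\<in>Poly_Mapping.keys p. sc (Poly_Mapping.lookup p w) (g w))"

lemma lin_ext_eq_sum_superset: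
  assumes "finite S" "Poly_Mapping.keys p \<subseteq> S" "\<And>b. sc 0 b = 0"
  shows "lin_ext sc g p = (\<Sum>w\<in>S. sc (Poly_Mapping.lookup p w) (g w))"
  unfolding lin_ext_def using assms by (intro sum.mono_neutral_left) (auto simp: in_keys_iff)

lemma lin_ext_add:
  assumes "\<And>b. sc 0 b = 0" "\<And>a c b. sc (a + c) b = sc a b + sc c b"
  shows "lin_ext sc g (p + q) = lin_ext sc g p + lin_ext sc g q"
proof -
  let ?S = "Poly_Mapping.keys p \<union> Poly_Mapping.keys q"
  have "lin_ext sc g (p + q) = (\<Sum>w\<in>?S. sc (Poly_Mapping.lookup (p + q) w) (g w))"
    using keys_add[of p q] by (intro lin_ext_eq_sum_superset assms) auto
  also have "\<dots> = (\<Sum>w\<in>?S. sc (Poly_Mapping.lookup p w) (g w)) + (\<Sum>w\<in>?S. sc (Poly_Mapping.lookup q w) (g w))"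
    by (simp add: lookup_add assms sum.distrib)
  also have "\<dots> = lin_ext sc g p + lin_ext sc g q"
    by (subst (1 2) lin_ext_eq_sum_superset[where S="?S"]) (auto simp: assms)
  finally show ?thesis .
qed

lemma lin_ext_single:
  assumes "\<And>b. sc 0 b = 0"
  shows "lin_ext sc g (Poly_Mapping.single w c) = sc c (g w)"
  unfolding lin_ext_def using assms by auto

lemma lin_ext_0 [simp]: "lin_ext sc g 0 = 0"
  by (simp add: lin_ext_def)

section \<open>Normal forms\<close>

text \<open>A normal form is an element \<open>P :: 'k poly poly\<close>: the outer variable is \<open>y\<close>, the inner
one \<open>x\<close>, and \<open>P\<close> stands for \<open>\<Sum>\<^sub>j (coeff P j)(x) y\<^sup>j\<close>, coefficients written to the left.
Left multiplication by \<open>y\<close> then reads \<open>y a(x) y\<^sup>j = a(x) y\<^sup>j\<^sup>+\<^sup>1 + x\<^sup>N a'(x) y\<^sup>j\<close>.\<close>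

definition delta :: "nat \<Rightarrow> 'k::field_char_0 poly \<Rightarrow> 'k poly" where
  "delta N p = [:0, 1:] ^ N * pderiv p"

definition lmult_x :: "'k::field_char_0 poly poly \<Rightarrow> 'k poly poly" where
  "lmult_x R = smult [:0, 1:] R"

definition lmult_y :: "nat \<Rightarrow> 'k::field_char_0 poly poly \<Rightarrow> 'k poly poly" where
  "lmult_y N R = pCons 0 R + map_poly (delta N) R"

fun lmult_word :: "nat \<Rightarrow> word \<Rightarrow> 'k::field_char_0 poly poly \<Rightarrow> 'k poly poly" where
  "lmult_word N (W bs) R = foldr (\<lambda>b R. if b then lmult_y N R else lmult_x R) bs R"

definition nf :: "nat \<Rightarrow> 'k::field_char_0 free_alg \<Rightarrow> 'k poly poly" where
  "nf N p = lin_ext (\<lambda>c R. smult [:c:] R) (\<lambda>w. lmult_word N w 1) p"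

lemma delta_0 [simp]: "delta N 0 = 0"
  by (simp add: delta_def)

lemma delta_1 [simp]: "delta N 1 = 0"
  by (simp add: delta_def)

lemma delta_add: "delta N (a + b) = delta N a + delta N b"
  by (simp add: delta_def pderiv_add algebra_simps)

lemma delta_smult: "delta N (smult c a) = smult c (delta N a)"
  by (simp add: delta_def pderiv_smult)

lemma delta_pCons: "delta N (pCons b a) = [:0, 1:] ^ N * a + [:0, 1:] * delta N a"
  by (simp add: delta_def pderiv_pCons algebra_simps)

lemma coeff_lmult_y:
  "coeff (lmult_y N R) k = (if k = 0 then 0 else coeff R (k - 1)) + delta N (coeff R k)"
  by (simp add: lmult_y_def coeff_map_poly coeff_pCons')

lemma coeff_lmult_y_Suc: "coeff (lmult_y N R) (Suc k) = coeff R k + delta N (coeff R (Suc k))"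
  by (simp add: coeff_lmult_y)

lemma lmult_y_add: "lmult_y N (R + S) = lmult_y N R + lmult_y N S"
  by (rule poly_eqI) (simp add: coeff_lmult_y delta_add)

lemma lmult_y_0 [simp]: "lmult_y N 0 = 0"
  by (rule poly_eqI) (simp add: coeff_lmult_y)

lemma lmult_y_smult: "lmult_y N (smult [:c:] R) = smult [:c:] (lmult_y N R)"
  by (rule poly_eqI) (simp add: coeff_lmult_y delta_smult algebra_simps)

lemma lmult_y_pCons: "lmult_y N (pCons a R) = pCons (delta N a) ([:a:] + lmult_y N R)"
  by (rule poly_eqI) (simp add: coeff_lmult_y coeff_pCons' algebra_simps)

lemma lmult_x_add: "lmult_x (R + S) = lmult_x R + lmult_x S"
  by (simp add: lmult_x_def smult_add_right)

lemma lmult_x_0 [simp]: "lmult_x 0 = 0"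
  by (simp add: lmult_x_def)

lemma lmult_x_smult: "lmult_x (smult [:c:] R) = smult [:c:] (lmult_x R)"
  by (simp add: lmult_x_def mult.commute)

lemma lmult_y_lmult_x: "lmult_y N (lmult_x R) = lmult_x (lmult_y N R) + smult ([:0, 1:] ^ N) R"
  by (rule poly_eqI) (simp add: coeff_lmult_y lmult_x_def delta_def pderiv_mult algebra_simps pderiv_pCons)

lemma lmult_y_power_1: "(lmult_y N ^^ j) 1 = monom 1 j"
proof (induction j)
  case 0 then show ?case by (simp add: monom_0 one_pCons)
next
  case (Suc j) then show ?case by (simp add: lmult_y_def map_poly_monom monom_Suc)
qed

lemma lmult_word_add: "lmult_word N w (R + S) = lmult_word N w R + lmult_word N w S"
proof (cases w)
  case (W bs)
  show ?thesis unfolding W lmult_word.simps by (induction bs) (auto simp: lmult_y_add lmult_x_add)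
qed

lemma lmult_word_0 [simp]: "lmult_word N w 0 = 0"
proof (cases w)
  case (W bs) show ?thesis unfolding W lmult_word.simps by (induction bs) auto
qed

lemma lmult_word_smult: "lmult_word N w (smult [:c:] R) = smult [:c:] (lmult_word N w R)"
proof (cases w)
  case (W bs)
  show ?thesis unfolding W lmult_word.simps by (induction bs) (auto simp: lmult_y_smult lmult_x_smult)
qed

lemma lmult_word_append: "lmult_word N (w + v) R = lmult_word N w (lmult_word N v R)"
  by (cases w; cases v) simp

lemma smult_const_add: "smult [:a + c:] P = smult [:a:] P + smult [:c:] (P :: 'k::comm_ring_1 poly poly)"
  by (simp add: smult_add_left[symmetric])

lemma smult_const_1 [simp]: "smult [:1:] P = (P :: 'k::comm_ring_1 poly poly)"
  by (rule poly_eqI) (simp add: smult_1_left)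

lemma nf_single: "nf N (Poly_Mapping.single w c) = smult [:c:] (lmult_word N w 1)"
  unfolding nf_def by (rule lin_ext_single) simp

lemma nf_add: "nf N (p + q) = nf N p + nf N q"
  unfolding nf_def by (rule lin_ext_add) (auto simp: smult_const_add)

lemma nf_0 [simp]: "nf N 0 = 0"
  by (simp add: nf_def)

lemma nf_diff: "nf N (p - q) = nf N p - nf N q"
  by (metis nf_add diff_add_cancel eq_diff_eq)

lemma nf_sum: "nf N (\<Sum>i\<in>S. f i) = (\<Sum>i\<in>S. nf N (f i))"
  by (induction S rule: infinite_finite_induct) (auto simp: nf_add)

lemma nf_single_mult: "nf N (Poly_Mapping.single w c * r) = smult [:c:] (lmult_word N w (nf N r))"
proof (induction r rule: poly_mapping_single_induct)
  case zero then show ?case by simp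
next
  case (single v d r)
  have "nf N (Poly_Mapping.single w c * (Poly_Mapping.single v d + r))
      = nf N (Poly_Mapping.single (w + v) (c * d)) + nf N (Poly_Mapping.single w c * r)"
    by (simp add: distrib_left mult_single nf_add)
  also have "\<dots> = smult [:c:] (lmult_word N w (nf N (Poly_Mapping.single v d + r)))"
    by (simp add: single.IH nf_single nf_add lmult_word_add lmult_word_smult lmult_word_append
        smult_add_right mult.commute[of d c])
  finally show ?case .
qed

lemma nf_fx_mult: "nf N (fx * r) = lmult_x (nf N r)"
  using nf_single_mult[of N "W [False]" 1 r] by (simp add: fx_def)

lemma nf_fy_mult: "nf N (fy * r) = lmult_y N (nf N r)"
  using nf_single_mult[of N "W [True]" 1 r] by (simp add: fy_def)

lemma nf_fscal_mult: "nf N (fscal c * r) = smult [:c:] (nf N r)"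
  using nf_single_mult[of N "W []" c r] by (simp add: fscal_def)

lemma nf_1 [simp]: "nf N 1 = 1"
  by (simp only: one_free_alg_eq_single nf_single) (simp add: one_pCons)

lemma nf_fx_power_mult: "nf N (fx ^ n * r) = smult ([:0, 1:] ^ n) (nf N r)"
  by (induction n) (simp_all add: mult.assoc nf_fx_mult lmult_x_def)

lemma nf_fy_power_mult: "nf N (fy ^ n * r) = (lmult_y N ^^ n) (nf N r)"
  by (induction n) (simp_all add: mult.assoc nf_fy_mult)

lemma nf_fpoly_mult: "nf N (fpoly a * r) = smult a (nf N r)"
proof (induction a)
  case 0 then show ?case by simp
next
  case (pCons b a)
  have "nf N (fpoly (pCons b a) * r) = smult [:b:] (nf N r) + lmult_x (smult a (nf N r))"
    by (simp add: fpoly_pCons distrib_right nf_add nf_fscal_mult mult.assoc nf_fx_mult pCons.IH)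
  then show ?case by (simp add: lmult_x_def smult_add_left[symmetric])
qed

lemma nf_fx: "nf N fx = [:[:0, 1:]:]"
  using nf_fx_mult[of N 1] by (simp add: lmult_x_def one_pCons)

lemma nf_fy: "nf N fy = [:0, 1:]"
proof -
  have "nf N fy = lmult_y N 1" using nf_fy_mult[of N 1] by simp
  also have "\<dots> = [:0, 1:]"
    using lmult_y_power_1[where N=N and j=1] by (simp add: monom_Suc monom_0 one_pCons)
  finally show ?thesis .
qed

lemma nf_fpoly: "nf N (fpoly a) = [:a:]"
  using nf_fpoly_mult[of N a 1] by simp

lemma nf_relator_mult: "nf N (relator N * b) = 0"
proof -
  have "relator N * b = fy * (fx * b) - fx * (fy * b) - fx ^ N * b"
    by (simp add: relator_def algebra_simps)
  then show ?thesis
    by (simp add: nf_diff nf_fy_mult nf_fx_mult nf_fx_power_mult lmult_y_lmult_x)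
qed

lemma nf_rel_ideal: "p \<in> rel_ideal N \<Longrightarrow> nf N p = 0"
proof (induction rule: rel_ideal.induct)
  case (gen a b)
  show ?case
    by (induction a rule: poly_mapping_single_induct)
       (simp_all add: distrib_right nf_add mult.assoc nf_single_mult nf_relator_mult)
qed (simp_all add: nf_add)

lemma rel_equiv_imp_nf_eq: "rel_equiv N p q \<Longrightarrow> nf N p = nf N q"
  unfolding rel_equiv_def using nf_rel_ideal nf_diff by (metis eq_iff_diff_eq_0)

definition of_nf :: "'k::field_char_0 poly poly \<Rightarrow> 'k free_alg" where
  "of_nf P = (\<Sum>j\<le>degree P. fpoly (coeff P j) * fy ^ j)"

lemma of_nf_eq_sum_lessThan:
  assumes "degree P < M"
  shows "of_nf P = (\<Sum>j<M. fpoly (coeff P j) * fy ^ j)"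
  unfolding of_nf_def using assms by (intro sum.mono_neutral_left) (auto simp: coeff_eq_0)

lemma of_nf_0 [simp]: "of_nf 0 = 0"
  by (simp add: of_nf_def)

lemma of_nf_pCons: "of_nf (pCons a P) = fpoly a + of_nf P * fy"
proof -
  let ?M = "Suc (degree P)"
  have "of_nf (pCons a P) = (\<Sum>j<Suc ?M. fpoly (coeff (pCons a P) j) * fy ^ j)"
    by (rule of_nf_eq_sum_lessThan) (simp add: degree_pCons_le le_imp_less_Suc)
  also have "\<dots> = fpoly a + (\<Sum>j<?M. fpoly (coeff P j) * fy ^ Suc j)"
    by (subst sum.lessThan_Suc_shift) simp
  also have "(\<Sum>j<?M. fpoly (coeff P j) * fy ^ Suc j) = (\<Sum>j<?M. fpoly (coeff P j) * fy ^ j) * fy"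
    by (simp only: sum_distrib_right power_Suc2 mult.assoc)
  also have "(\<Sum>j<?M. fpoly (coeff P j) * fy ^ j) = of_nf P"
    by (rule of_nf_eq_sum_lessThan[symmetric]) simp
  finally show ?thesis .
qed

lemma of_nf_add: "of_nf (P + Q) = of_nf P + of_nf Q"
  by (induction P Q rule: poly_induct2) (simp_all add: of_nf_pCons fpoly_add algebra_simps)

lemma of_nf_const [simp]: "of_nf [:a:] = fpoly a"
  using of_nf_pCons[of a 0] by simp

lemma of_nf_1 [simp]: "of_nf 1 = 1"
  by (simp add: one_pCons)

lemma of_nf_smult_const: "of_nf (smult [:c:] P) = fscal c * of_nf P"
  by (induction P) (simp_all add: of_nf_pCons fpoly_smult fpoly_add algebra_simps)

lemma of_nf_lmult_x: "of_nf (lmult_x R) = fx * of_nf R"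
  unfolding lmult_x_def by (induction R) (simp_all add: of_nf_pCons fpoly_pCons algebra_simps)

lemma rel_equiv_fy_mult_fpoly: "rel_equiv N (fy * fpoly a) (fpoly a * fy + fpoly (delta N a))"
proof (induction a)
  case 0 then show ?case by simp
next
  case (pCons b a)
  have "fy * fpoly (pCons b a) = fscal b * fy + (fy * fx) * fpoly a"
    by (simp add: fpoly_pCons distrib_left mult.assoc fscal_commute[of b fy, symmetric])
  moreover have "rel_equiv N (fscal b * fy + (fy * fx) * fpoly a)
      (fscal b * fy + (fx * fy + fx ^ N) * fpoly a)"
    by (intro rel_equiv_add rel_equiv_mult rel_equiv_relator rel_equiv_refl)
  moreover have "fscal b * fy + (fx * fy + fx ^ N) * fpoly a
      = fscal b * fy + fx * (fy * fpoly a) + fx ^ N * fpoly a"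
    by (simp add: algebra_simps)
  moreover have "rel_equiv N (fscal b * fy + fx * (fy * fpoly a) + fx ^ N * fpoly a)
      (fscal b * fy + fx * (fpoly a * fy + fpoly (delta N a)) + fx ^ N * fpoly a)"
    by (intro rel_equiv_add rel_equiv_mult rel_equiv_refl pCons.IH)
  moreover have "fscal b * fy + fx * (fpoly a * fy + fpoly (delta N a)) + fx ^ N * fpoly a
      = fpoly (pCons b a) * fy + fpoly (delta N (pCons b a))"
    by (simp add: fpoly_pCons delta_pCons fpoly_add fpoly_mult fpoly_power algebra_simps
        fx_power_mult_fpoly)
  ultimately show ?case by (metis rel_equiv_trans)
qed

lemma rel_equiv_fy_mult_of_nf: "rel_equiv N (fy * of_nf R) (of_nf (lmult_y N R))"
proof (induction R)
  case 0 then show ?case by simp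
next
  case (pCons a R)
  have "fy * of_nf (pCons a R) = fy * fpoly a + (fy * of_nf R) * fy"
    by (simp add: of_nf_pCons algebra_simps)
  moreover have "rel_equiv N (fy * fpoly a + (fy * of_nf R) * fy)
      ((fpoly a * fy + fpoly (delta N a)) + of_nf (lmult_y N R) * fy)"
    by (intro rel_equiv_add rel_equiv_mult rel_equiv_refl rel_equiv_fy_mult_fpoly pCons.IH)
  moreover have "(fpoly a * fy + fpoly (delta N a)) + of_nf (lmult_y N R) * fy
      = of_nf (lmult_y N (pCons a R))"
    by (simp add: lmult_y_pCons of_nf_pCons of_nf_add algebra_simps)
  ultimately show ?case by (metis rel_equiv_trans)
qed

lemma rel_equiv_single_of_nf:
  "rel_equiv N (Poly_Mapping.single w (1::'k::field_char_0)) (of_nf (lmult_word N w 1))"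
proof (cases w)
  case (W bs)
  show ?thesis unfolding W
  proof (induction bs)
    case Nil
    then show ?case by (simp flip: one_free_alg_eq_single)
  next
    case (Cons b bs)
    have "rel_equiv N (letter b * Poly_Mapping.single (W bs) 1)
        (letter b * of_nf (lmult_word N (W bs) (1::'k poly poly)))"
      by (intro rel_equiv_mult rel_equiv_refl Cons.IH)
    moreover have "rel_equiv N (letter b * of_nf (lmult_word N (W bs) 1))
        (of_nf (lmult_word N (W (b # bs)) (1::'k poly poly)))"
      by (cases b) (simp_all add: letter_def rel_equiv_fy_mult_of_nf of_nf_lmult_x)
    ultimately show ?case by (simp only: single_Cons_word) (metis rel_equiv_trans)
  qed
qed

lemma rel_equiv_of_nf_nf: "rel_equiv N p (of_nf (nf N p))"
proof (induction p rule: poly_mapping_single_induct)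
  case zero then show ?case by simp
next
  case (single w c p)
  have "rel_equiv N (Poly_Mapping.single w c) (of_nf (nf N (Poly_Mapping.single w c)))"
    by (subst single_eq_fscal_mult)
       (simp add: nf_single of_nf_smult_const rel_equiv_mult rel_equiv_single_of_nf)
  then show ?case by (simp add: nf_add of_nf_add rel_equiv_add single.IH)
qed

lemma nf_of_nf: "nf N (of_nf P) = P"
proof -
  have "nf N (of_nf P) = (\<Sum>j\<le>degree P. nf N (fpoly (coeff P j) * fy ^ j))"
    by (simp add: of_nf_def nf_sum)
  also have "\<dots> = (\<Sum>j\<le>degree P. monom (coeff P j) j)"
    by (intro sum.cong refl)
       (simp add: nf_fpoly_mult nf_fy_power_mult[of N _ 1, simplified] lmult_y_power_1 smult_monom)
  also have "\<dots> = P" by (rule poly_as_sum_of_monoms)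
  finally show ?thesis .
qed

theorem rel_equiv_iff_nf_eq: "rel_equiv N p q \<longleftrightarrow> nf N p = nf N q"
  by (metis rel_equiv_imp_nf_eq rel_equiv_of_nf_nf rel_equiv_sym rel_equiv_trans)

definition nf_times :: "nat \<Rightarrow> 'k::field_char_0 poly poly \<Rightarrow> 'k poly poly \<Rightarrow> 'k poly poly" where
  "nf_times N P Q = nf N (of_nf P * of_nf Q)"

lemma nf_mult: "nf N (p * q) = nf_times N (nf N p) (nf N q)"
  unfolding nf_times_def by (intro rel_equiv_imp_nf_eq rel_equiv_mult rel_equiv_of_nf_nf)

lemma nf_times_eq_sum: "nf_times N P Q = (\<Sum>j\<le>degree P. smult (coeff P j) ((lmult_y N ^^ j) Q))"
proof -
  have "nf_times N P Q = (\<Sum>j\<le>degree P. nf N (fpoly (coeff P j) * (fy ^ j * of_nf Q)))"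
    by (simp add: nf_times_def of_nf_def sum_distrib_right nf_sum mult.assoc)
  then show ?thesis by (simp add: nf_fpoly_mult nf_fy_power_mult nf_of_nf)
qed

lemma nf_times_const_left: "nf_times N [:a:] Q = smult a Q"
  by (simp add: nf_times_eq_sum)

lemma nf_times_0_left [simp]: "nf_times N 0 P = 0"
  by (simp add: nf_times_def)

lemma nf_times_0_right [simp]: "nf_times N P 0 = 0"
  by (simp add: nf_times_def)

lemma nf_relation:
  "nf_times N [:0, 1:] [:[:0, 1:]:] - nf_times N [:[:0, 1:]:] [:0, 1:]
    = ([:[:0, 1:] ^ N:] :: 'k::field_char_0 poly poly)"
proof -
  have "nf N (relator N :: 'k free_alg) = 0" by (rule nf_rel_ideal[OF relator_in_rel_ideal])
  moreover have "nf N (fx ^ N :: 'k free_alg) = [:[:0, 1:] ^ N:]"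
    using nf_fx_power_mult[of N N 1] by (simp add: one_pCons)
  ultimately show ?thesis by (simp add: relator_def nf_diff nf_mult nf_fx nf_fy)
qed

section \<open>Top coefficients of products and commutators\<close>

lemma coeff_lmult_y_power_above: "k > degree R + i \<Longrightarrow> coeff ((lmult_y N ^^ i) R) k = 0"
proof (induction i arbitrary: k)
  case 0 then show ?case by (simp add: coeff_eq_0)
next
  case (Suc i)
  then obtain k' where "k = Suc k'" by (cases k) auto
  with Suc show ?case by (simp add: coeff_lmult_y_Suc)
qed

lemma coeff_lmult_y_power_top: "coeff ((lmult_y N ^^ i) R) (degree R + i) = lead_coeff R"
  by (induction i) (simp_all add: coeff_lmult_y_Suc coeff_lmult_y_power_above)

definition subleading_coeff :: "'a::zero poly \<Rightarrow> 'a" where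
  "subleading_coeff P = (if degree P = 0 then 0 else coeff P (degree P - 1))"

text \<open>Each application of \<open>lmult_y\<close> adds \<open>\<delta>(lead_coeff R)\<close> one step below the top.\<close>

lemma coeff_lmult_y_power_subtop:
  assumes "degree R + i \<ge> 1"
  shows "coeff ((lmult_y N ^^ i) R) (degree R + i - 1)
    = subleading_coeff R + of_nat i * delta N (lead_coeff R)"
  using assms
proof (induction i)
  case 0 then show ?case by (simp add: subleading_coeff_def)
next
  case (Suc i)
  show ?case
  proof (cases "degree R + i \<ge> 1")
    case True
    then have "degree R + Suc i - 1 = Suc (degree R + i - 1)" "Suc (degree R + i - 1) = degree R + i"
      by simp_all
    then have "coeff ((lmult_y N ^^ Suc i) R) (degree R + Suc i - 1)
        = coeff ((lmult_y N ^^ i) R) (degree R + i - 1) + delta N (coeff ((lmult_y N ^^ i) R) (degree R + i))"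
      using coeff_lmult_y_Suc[of N "(lmult_y N ^^ i) R" "degree R + i - 1"] by simp
    then show ?thesis
      using Suc.IH[OF True] coeff_lmult_y_power_top[where N=N and i=i and R=R] by (simp add: algebra_simps)
  next
    case False
    then have "degree R = 0" "i = 0" by auto
    then show ?thesis by (simp add: coeff_lmult_y subleading_coeff_def)
  qed
qed

lemma coeff_nf_times:
  "coeff (nf_times N P Q) k = (\<Sum>j\<le>degree P. coeff P j * coeff ((lmult_y N ^^ j) Q) k)"
  by (simp add: nf_times_eq_sum coeff_sum)

lemma coeff_nf_times_above: "k > degree P + degree Q \<Longrightarrow> coeff (nf_times N P Q) k = 0"
  unfolding coeff_nf_times by (intro sum.neutral) (auto simp: coeff_lmult_y_power_above)

lemma coeff_nf_times_top:
  "coeff (nf_times N P Q) (degree P + degree Q) = lead_coeff P * lead_coeff Q"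
proof -
  let ?t = "\<lambda>j. coeff P j * coeff ((lmult_y N ^^ j) Q) (degree P + degree Q)"
  have "coeff (nf_times N P Q) (degree P + degree Q) = ?t (degree P) + (\<Sum>j\<in>{..degree P} - {degree P}. ?t j)"
    unfolding coeff_nf_times by (subst sum.remove[of _ "degree P"]) auto
  also have "(\<Sum>j\<in>{..degree P} - {degree P}. ?t j) = 0"
    by (intro sum.neutral) (auto simp: coeff_lmult_y_power_above)
  finally show ?thesis using coeff_lmult_y_power_top[where N=N and i="degree P" and R=Q] by (simp add: add.commute)
qed

lemma coeff_nf_times_subtop:
  assumes "degree P + degree Q \<ge> 1"
  shows "coeff (nf_times N P Q) (degree P + degree Q - 1)
    = lead_coeff P * (subleading_coeff Q + of_nat (degree P) * delta N (lead_coeff Q))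
      + subleading_coeff P * lead_coeff Q"
proof -
  let ?d = "degree P" and ?k = "degree P + degree Q - 1"
  let ?t = "\<lambda>j. coeff P j * coeff ((lmult_y N ^^ j) Q) ?k"
  have top: "?t ?d = lead_coeff P * (subleading_coeff Q + of_nat ?d * delta N (lead_coeff Q))"
    using coeff_lmult_y_power_subtop[of Q ?d N] assms by (simp add: add.commute)
  show ?thesis
  proof (cases "?d = 0")
    case True
    then show ?thesis using top by (simp add: coeff_nf_times subleading_coeff_def)
  next
    case False
    have "coeff (nf_times N P Q) ?k = ?t ?d + ?t (?d - 1) + (\<Sum>j\<in>{..?d} - {?d} - {?d - 1}. ?t j)"
      unfolding coeff_nf_times using False
      by (subst sum.remove[of _ ?d], simp, simp, subst sum.remove[of _ "?d - 1"]) (auto simp: add.assoc)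
    also have "(\<Sum>j\<in>{..?d} - {?d} - {?d - 1}. ?t j) = 0"
      by (intro sum.neutral) (auto simp: coeff_lmult_y_power_above)
    also have "?t (?d - 1) = subleading_coeff P * lead_coeff Q"
    proof -
      have "?k = degree Q + (?d - 1)" using False by simp
      then show ?thesis
        using coeff_lmult_y_power_top[where N=N and i="?d - 1" and R=Q] False by (simp add: subleading_coeff_def)
    qed
    finally show ?thesis using top by simp
  qed
qed

definition nf_bracket :: "nat \<Rightarrow> 'k::field_char_0 poly poly \<Rightarrow> 'k poly poly \<Rightarrow> 'k poly poly" where
  "nf_bracket N U B = nf_times N U B - nf_times N B U"

lemma nf_bracket_0_right [simp]: "nf_bracket N U 0 = 0"
  by (simp add: nf_bracket_def)

lemma coeff_nf_bracket_above: "k \<ge> degree U + degree B \<Longrightarrow> coeff (nf_bracket N U B) k = 0"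
  using coeff_nf_times_top[of N U B] coeff_nf_times_top[of N B U]
    coeff_nf_times_above[of U B k N] coeff_nf_times_above[of B U k N]
  by (cases "k = degree U + degree B") (simp_all add: nf_bracket_def add.commute mult.commute)

lemma coeff_nf_bracket_subtop:
  assumes "degree U + degree B \<ge> 1"
  shows "coeff (nf_bracket N U B) (degree U + degree B - 1)
    = of_nat (degree U) * lead_coeff U * delta N (lead_coeff B)
      - of_nat (degree B) * lead_coeff B * delta N (lead_coeff U)"
  using coeff_nf_times_subtop[of U B N] coeff_nf_times_subtop[of B U N] assms
  by (simp add: nf_bracket_def add.commute algebra_simps)

section \<open>Iterated commutators\<close>

lemma coeff_mult_pderiv_top:
  fixes q r :: "'k::field_char_0 poly"
  shows "coeff (q * pderiv r) (degree q + degree r - 1) = of_nat (degree r) * lead_coeff q * lead_coeff r"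
proof (cases "degree r = 0")
  case True
  then have "pderiv r = 0" by (simp add: pderiv_eq_0_iff)
  with True show ?thesis by simp
next
  case False
  have "lead_coeff (pderiv r) = of_nat (degree r) * lead_coeff r"
    using False by (simp add: degree_pderiv coeff_pderiv)
  moreover have "degree q + degree r - 1 = degree q + degree (pderiv r)"
    using False by (simp add: degree_pderiv)
  ultimately show ?thesis by (simp add: coeff_mult_degree_sum)
qed

lemma degree_mult_pderiv_le:
  fixes q r :: "'k::field_char_0 poly"
  shows "degree (q * pderiv r) \<le> degree q + degree r - 1"
proof (cases "degree r = 0")
  case True
  then have "pderiv r = 0" by (simp add: pderiv_eq_0_iff)
  with True show ?thesis by simp
next
  case False then show ?thesis using degree_mult_le[of q "pderiv r"] by (simp add: degree_pderiv)
qed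

lemma weighted_wronskian_degree:
  fixes q r :: "'k::field_char_0 poly"
  assumes q: "q \<noteq> 0" and r: "r \<noteq> 0" and ne: "d * degree r \<noteq> e * degree q"
  defines "H \<equiv> smult (of_nat d) (q * pderiv r) - smult (of_nat e) (r * pderiv q)"
  shows "H \<noteq> 0" and "degree H = degree q + degree r - 1"
proof -
  let ?k = "degree q + degree r - 1"
  have "coeff H ?k = (of_nat (d * degree r) - of_nat (e * degree q)) * (lead_coeff q * lead_coeff r)"
    using coeff_mult_pderiv_top[of q r] coeff_mult_pderiv_top[of r q]
    unfolding H_def by (simp add: add.commute algebra_simps)
  moreover have "of_nat (d * degree r) \<noteq> (of_nat (e * degree q) :: 'k)"
    using ne by (metis of_nat_eq_iff)
  ultimately have nz: "coeff H ?k \<noteq> 0" using q r by simp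
  then show "H \<noteq> 0" by auto
  have "degree H \<le> ?k"
    unfolding H_def using degree_mult_pderiv_le[of q r] degree_mult_pderiv_le[of r q]
    by (intro degree_diff_le order.trans[OF degree_smult_le]) (simp_all add: add.commute)
  with le_degree[OF nz] show "degree H = ?k" by simp
qed

text \<open>When \<open>U\<close> has positive \<open>y\<close>-degree and the ratios of the \<open>x\<close>-degrees of the leading
coefficients to the \<open>y\<close>-degrees differ, the top two coefficients of the commutator cancel
only partially: its leading coefficient is \<open>x\<^sup>N\<close> times a weighted Wronskian of those of
\<open>U\<close> and \<open>B\<close>.\<close>

lemma nf_bracket_lead_coeff:
  fixes U B :: "'k::field_char_0 poly poly"
  assumes U: "degree U \<ge> 1" and B: "B \<noteq> 0"
    and ne: "degree U * degree (lead_coeff B) \<noteq> degree B * degree (lead_coeff U)"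
  defines "H \<equiv> smult (of_nat (degree U)) (lead_coeff U * pderiv (lead_coeff B))
      - smult (of_nat (degree B)) (lead_coeff B * pderiv (lead_coeff U))"
  shows "degree (nf_bracket N U B) = degree U + degree B - 1"
    and "lead_coeff (nf_bracket N U B) = [:0, 1:] ^ N * H"
    and "H \<noteq> 0" and "degree H = degree (lead_coeff U) + degree (lead_coeff B) - 1"
proof -
  have "U \<noteq> 0" using U by auto
  then show H0: "H \<noteq> 0" and "degree H = degree (lead_coeff U) + degree (lead_coeff B) - 1"
    using weighted_wronskian_degree[of "lead_coeff U" "lead_coeff B"] B ne unfolding H_def by auto
  have top: "coeff (nf_bracket N U B) (degree U + degree B - 1) = [:0, 1:] ^ N * H"
    using coeff_nf_bracket_subtop[of U B N] U by (simp add: H_def delta_def algebra_simps of_nat_poly)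
  moreover have "[:0, 1:] ^ N * H \<noteq> 0" using H0 by simp
  moreover have "coeff (nf_bracket N U B) k = 0" if "k > degree U + degree B - 1" for k
    using coeff_nf_bracket_above[of U B k N] that U by simp
  ultimately show "degree (nf_bracket N U B) = degree U + degree B - 1"
    by (metis degree_le le_degree order.antisym)
  with top show "lead_coeff (nf_bracket N U B) = [:0, 1:] ^ N * H" by simp
qed

lemma nf_bracket_preserves_degree_ratio:
  fixes U B :: "'k::field_char_0 poly poly"
  assumes N: "N \<ge> 1" and U: "degree U \<ge> 1" and B: "B \<noteq> 0"
    and gt: "degree U * degree (lead_coeff B) > degree B * degree (lead_coeff U)"
  shows "nf_bracket N U B \<noteq> 0"
    and "degree U * degree (lead_coeff (nf_bracket N U B))
      > degree (nf_bracket N U B) * degree (lead_coeff U)"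
proof -
  let ?dU = "degree U" and ?dB = "degree B"
    and ?dq = "degree (lead_coeff U)" and ?dr = "degree (lead_coeff B)"
  have ne: "?dU * ?dr \<noteq> ?dB * ?dq" using gt by simp
  note deg = nf_bracket_lead_coeff(1)[OF U B ne, of N]
    and lead = nf_bracket_lead_coeff(2)[OF U B ne, of N]
    and H = nf_bracket_lead_coeff(3,4)[OF U B ne]
  show "nf_bracket N U B \<noteq> 0" using lead H by auto
  have "degree (lead_coeff (nf_bracket N U B)) = N + (?dq + ?dr - 1)"
    using lead H by (simp add: degree_mult_eq degree_power_eq)
  moreover have "?dU * (N + (?dq + ?dr - 1)) > (?dU + ?dB - 1) * ?dq"
  proof -
    obtain u where u: "?dU = Suc u" using U by (cases ?dU) auto
    obtain s where s: "?dr = Suc s" using gt by (cases ?dr) auto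
    obtain n where n: "N = Suc n" using N by (cases N) auto
    have "?dB * ?dq < Suc u * Suc s" using gt u s by simp
    then show ?thesis using u s n by (simp add: algebra_simps)
  qed
  ultimately show "?dU * degree (lead_coeff (nf_bracket N U B)) > degree (nf_bracket N U B) * ?dq"
    using deg by simp
qed

lemma nf_bracket_power_x_nonzero:
  fixes U :: "'k::field_char_0 poly poly"
  assumes N: "N \<ge> 1" and U: "degree U \<ge> 1"
  shows "(nf_bracket N U ^^ k) [:[:0, 1:]:] \<noteq> 0"
proof -
  have "(nf_bracket N U ^^ k) [:[:0, 1:]:] \<noteq> 0 \<and>
      degree U * degree (lead_coeff ((nf_bracket N U ^^ k) [:[:0, 1:]:]))
        > degree ((nf_bracket N U ^^ k) [:[:0, 1:]:]) * degree (lead_coeff U)"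
    by (induction k) (use U nf_bracket_preserves_degree_ratio[OF N U] in auto)
  then show ?thesis ..
qed

lemma nf_bracket_x_nilpotent:
  fixes B :: "'k::field_char_0 poly poly"
  shows "degree B < j \<Longrightarrow> (nf_bracket N [:[:0, 1:]:] ^^ j) B = 0"
proof (induction j arbitrary: B)
  case 0 then show ?case by simp
next
  case (Suc j)
  have above: "\<And>k. k \<ge> degree B \<Longrightarrow> coeff (nf_bracket N [:[:0, 1:]:] B) k = 0"
    using coeff_nf_bracket_above[of "[:[:0, 1:]:]" B] by simp
  show ?case
  proof (cases "degree B = 0")
    case True
    then have "nf_bracket N [:[:0, 1:]:] B = 0" using above by (intro poly_eqI) simp
    then show ?thesis by (simp add: funpow_Suc_right del: funpow.simps) (induction j, auto)
  next
    case False
    then have "degree (nf_bracket N [:[:0, 1:]:] B) \<le> degree B - 1"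
      using above by (intro degree_le) auto
    then have "degree (nf_bracket N [:[:0, 1:]:] B) < j" using Suc.prems False by linarith
    then show ?thesis using Suc.IH by (simp add: funpow_Suc_right del: funpow.simps)
  qed
qed

section \<open>Automorphisms of the normal-form algebra\<close>

definition nf_aut :: "nat \<Rightarrow> ('k::field_char_0 poly poly \<Rightarrow> 'k poly poly) \<Rightarrow> bool" where
  "nf_aut N T \<longleftrightarrow> bij T \<and> (\<forall>P Q. T (P + Q) = T P + T Q)
     \<and> (\<forall>P Q. T (nf_times N P Q) = nf_times N (T P) (T Q))
     \<and> (\<forall>c P. T (smult [:c:] P) = smult [:c:] (T P)) \<and> T 1 = 1"

lemma nf_aut_add: "nf_aut N T \<Longrightarrow> T (P + Q) = T P + T Q"
  by (simp add: nf_aut_def)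

lemma nf_aut_nf_times: "nf_aut N T \<Longrightarrow> T (nf_times N P Q) = nf_times N (T P) (T Q)"
  by (simp add: nf_aut_def)

lemma nf_aut_smult: "nf_aut N T \<Longrightarrow> T (smult [:c:] P) = smult [:c:] (T P)"
  by (simp add: nf_aut_def)

lemma nf_aut_one: "nf_aut N T \<Longrightarrow> T 1 = 1"
  by (simp add: nf_aut_def)

lemma nf_aut_bij: "nf_aut N T \<Longrightarrow> bij T"
  by (simp add: nf_aut_def)

lemma nf_aut_zero: "nf_aut N T \<Longrightarrow> T 0 = 0"
  using nf_aut_add[of N T 0 0] by simp

lemma nf_aut_diff: "nf_aut N T \<Longrightarrow> T (P - Q) = T P - T Q"
  by (metis nf_aut_add diff_add_cancel eq_diff_eq)

lemma nf_aut_nf_bracket: "nf_aut N T \<Longrightarrow> T (nf_bracket N P Q) = nf_bracket N (T P) (T Q)"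
  by (simp add: nf_bracket_def nf_aut_diff nf_aut_nf_times)

lemma nf_aut_nf_bracket_power:
  "nf_aut N T \<Longrightarrow> T ((nf_bracket N P ^^ j) Q) = (nf_bracket N (T P) ^^ j) (T Q)"
  by (induction j) (simp_all add: nf_aut_nf_bracket)

lemma nf_aut_inv:
  assumes T: "nf_aut N T"
  shows "nf_aut N (inv_into UNIV T)"
proof -
  have b: "bij T" using T by (rule nf_aut_bij)
  have T_inv: "T (inv_into UNIV T a) = a" for a using b by (simp add: bij_def surj_f_inv_f)
  have inj: "T a = T b' \<Longrightarrow> a = b'" for a b' using b by (simp add: bij_def inj_eq)
  show ?thesis unfolding nf_aut_def
  proof (intro conjI allI)
    show "bij (inv_into UNIV T)" using b by (rule bij_imp_bij_inv)
    show "inv_into UNIV T (P + Q) = inv_into UNIV T P + inv_into UNIV T Q" for P Q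
      by (rule inj) (simp add: T_inv nf_aut_add[OF T])
    show "inv_into UNIV T (nf_times N P Q) = nf_times N (inv_into UNIV T P) (inv_into UNIV T Q)" for P Q
      by (rule inj) (simp add: T_inv nf_aut_nf_times[OF T])
    show "inv_into UNIV T (smult [:c:] P) = smult [:c:] (inv_into UNIV T P)" for c P
      by (rule inj) (simp add: T_inv nf_aut_smult[OF T])
    show "inv_into UNIV T 1 = 1"
      by (rule inj) (simp add: T_inv nf_aut_one[OF T])
  qed
qed

text \<open>\<open>T\<close> conjugates the locally nilpotent \<open>[x, -]\<close> into \<open>[T x, -]\<close>, which is not
locally nilpotent once \<open>T x\<close> involves \<open>y\<close>.\<close>

lemma nf_aut_x_in_kx:
  assumes T: "nf_aut N T" and N: "N \<ge> 1"
  shows "degree (T [:[:0, 1:]:]) = 0"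
proof (rule ccontr)
  assume "degree (T [:[:0, 1:]:]) \<noteq> 0"
  then have pos: "degree (T [:[:0, 1:]:]) \<ge> 1" by simp
  obtain B where B: "T B = [:[:0, 1:]:]" using nf_aut_bij[OF T] by (metis bij_pointE)
  have "(nf_bracket N [:[:0, 1:]:] ^^ Suc (degree B)) B = 0" by (rule nf_bracket_x_nilpotent) simp
  then have "(nf_bracket N (T [:[:0, 1:]:]) ^^ Suc (degree B)) [:[:0, 1:]:] = 0"
    by (metis B nf_aut_nf_bracket_power[OF T] nf_aut_zero[OF T])
  with nf_bracket_power_x_nonzero[OF N pos] show False by blast
qed

lemma nf_aut_const:
  assumes T: "nf_aut N T" and q: "T [:[:0, 1:]:] = [:q:]"
  shows "T [:r:] = [:pcompose r q:]"
proof (induction r)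
  case 0 then show ?case using nf_aut_zero[OF T] by simp
next
  case (pCons b r)
  have Tb: "T [:[:b:]:] = [:[:b:]:]"
    using nf_aut_smult[OF T, of b 1] nf_aut_one[OF T] by (simp add: one_pCons)
  have "[:pCons b r:] = smult [:b:] 1 + nf_times N [:[:0, 1:]:] [:r:]"
    by (simp add: nf_times_const_left one_pCons)
  then have "T [:pCons b r:] = smult [:b:] 1 + nf_times N [:q:] [:pcompose r q:]"
    by (simp add: nf_aut_add[OF T] Tb nf_aut_nf_times[OF T] q pCons.IH)
  also have "\<dots> = [:pcompose (pCons b r) q:]"
    by (simp add: nf_times_const_left one_pCons pcompose_pCons)
  finally show ?case .
qed

lemma nf_aut_x_linear:
  assumes T: "nf_aut N T" and N: "N \<ge> 1"
  obtains c l where "l \<noteq> 0" "T [:[:0, 1:]:] = [:[:c, l:]:]"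
proof -
  obtain q where q: "T [:[:0, 1:]:] = [:q:]"
    using nf_aut_x_in_kx[OF T N] by (metis degree_eq_zeroE)
  obtain r where r: "inv_into UNIV T [:[:0, 1:]:] = [:r:]"
    using nf_aut_x_in_kx[OF nf_aut_inv[OF T] N] by (metis degree_eq_zeroE)
  have "T (inv_into UNIV T [:[:0, 1:]:]) = [:[:0, 1:]:]"
    using nf_aut_bij[OF T] by (simp add: bij_def surj_f_inv_f)
  then have "pcompose r q = [:0, 1:]" using nf_aut_const[OF T q, of r] r by simp
  then have "degree r * degree q = 1" using degree_pcompose[of r q] by simp
  then have "degree q = 1" by simp
  then obtain c l where "q = [:c, l:]" "l \<noteq> 0" by (rule degree1_coeffs)
  with q show thesis by (intro that) auto
qed

lemma degree_eq_1_if_nf_bracket_eq_const: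
  fixes V :: "'k::field_char_0 poly poly"
  assumes rel: "nf_bracket N V [:q:] = [:r:]" and r: "r \<noteq> 0" and q: "delta N q \<noteq> 0"
  shows "degree V = 1"
proof (rule ccontr)
  assume "degree V \<noteq> 1"
  then consider "degree V = 0" | "degree V \<ge> 2" by linarith
  then show False
  proof cases
    case 1
    then have "coeff (nf_bracket N V [:q:]) 0 = 0" using coeff_nf_bracket_above[of V "[:q:]" 0 N] by simp
    with rel r show False by simp
  next
    case 2
    have "coeff (nf_bracket N V [:q:]) (degree V - 1) = of_nat (degree V) * lead_coeff V * delta N q"
      using coeff_nf_bracket_subtop[of V "[:q:]" N] 2 by simp
    moreover have "coeff (nf_bracket N V [:q:]) (degree V - 1) = 0"
      using rel 2 by (simp add: coeff_pCons')
    moreover have "V \<noteq> 0" using 2 by auto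
    ultimately show False using 2 q by (simp add: of_nat_poly)
  qed
qed

lemma nf_bracket_eq_linear_power:
  fixes V :: "'k::field_char_0 poly poly"
  assumes N: "N \<ge> 1" and l: "l \<noteq> 0"
    and rel: "nf_bracket N V [:[:c, l:]:] = [:[:c, l:] ^ N:]"
  shows "c = 0" and "V = [:coeff V 0, [:l ^ (N - 1):]:]"
proof -
  let ?q = "[:c, l:]"
  have dq: "delta N ?q = [:0, 1:] ^ N * [:l:]" by (simp add: delta_def pderiv_pCons)
  have xN: "([:0, 1:] :: 'k poly) ^ N \<noteq> 0" by simp
  have V: "degree V = 1"
    using rel l dq by (intro degree_eq_1_if_nf_bracket_eq_const[of N V ?q "?q ^ N"]) simp_all
  then have lead: "lead_coeff V * ([:0, 1:] ^ N * [:l:]) = ?q ^ N"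
    using coeff_nf_bracket_subtop[of V "[:?q:]" N] dq rel by simp
  have "poly (?q ^ N) 0 = 0"
    using arg_cong[OF lead, of "\<lambda>p. poly p 0"] N by (simp add: power_0_left)
  then show c: "c = 0" by simp
  have lN: "l ^ N = l * l ^ (N - 1)" using N by (cases N) auto
  have "[:0, l:] ^ N = smult (l ^ N) ([:0, 1:] ^ N)"
    by (simp flip: smult_power)
  then have "smult l (lead_coeff V * [:0, 1:] ^ N) = smult l ([:l ^ (N - 1):] * [:0, 1:] ^ N)"
    using lead by (simp add: c lN algebra_simps)
  then have "lead_coeff V * [:0, 1:] ^ N = [:l ^ (N - 1):] * [:0, 1:] ^ N"
    using l by (rule smult_cancel[rotated])
  then have "lead_coeff V = [:l ^ (N - 1):]" using xN by (metis mult_right_cancel)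
  then show "V = [:coeff V 0, [:l ^ (N - 1):]:]"
    using V by (metis degree1_coeffs coeff_pCons_0 coeff_pCons_Suc One_nat_def pCons_0_0)
qed

lemma pcompose_power_left: "pcompose (p ^ n) q = pcompose p q ^ n"
  by (induction n) (simp_all add: pcompose_mult pcompose_1)

theorem nf_aut_generators:
  assumes T: "nf_aut N T" and N: "N \<ge> 1"
  obtains l f where "l \<noteq> 0" "T [:[:0, 1:]:] = [:[:0, l:]:]" "T [:0, 1:] = [:f, [:l ^ (N - 1):]:]"
proof -
  obtain c l where l: "l \<noteq> 0" and x: "T [:[:0, 1:]:] = [:[:c, l:]:]"
    by (rule nf_aut_x_linear[OF T N])
  have "T (nf_times N [:0, 1:] [:[:0, 1:]:] - nf_times N [:[:0, 1:]:] [:0, 1:]) = T [:[:0, 1:] ^ N:]"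
    by (simp only: nf_relation)
  then have "nf_bracket N (T [:0, 1:]) [:[:c, l:]:] = [:[:c, l:] ^ N:]"
    by (simp add: nf_aut_diff[OF T] nf_aut_nf_times[OF T] x nf_aut_const[OF T x] pcompose_power_left pcompose_pCons
        nf_bracket_def)
  from nf_bracket_eq_linear_power[OF N l this] x show thesis by (intro that[OF l]) auto
qed

section \<open>Automorphisms of \<open>A\<^sub>N\<close>\<close>

definition class_nf :: "nat \<Rightarrow> 'k::field_char_0 free_alg set \<Rightarrow> 'k poly poly" where
  "class_nf N P = nf N (rep P)"

lemma class_nf_cls: "class_nf N (cls N p) = nf N p"
  by (simp add: class_nf_def rel_equiv_imp_nf_eq rel_equiv_rep_cls)

lemma cls_eq_iff_nf_eq: "cls N p = cls N q \<longleftrightarrow> nf N p = nf N q"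
  by (simp add: cls_eq_iff rel_equiv_iff_nf_eq)

lemma cls_of_nf_class_nf: "P \<in> A N \<Longrightarrow> cls N (of_nf (class_nf N P)) = P"
  by (erule A_cases) (simp add: class_nf_cls cls_eq_iff_nf_eq nf_of_nf)

lemma class_nf_inj: "P \<in> A N \<Longrightarrow> Q \<in> A N \<Longrightarrow> class_nf N P = class_nf N Q \<Longrightarrow> P = Q"
  by (metis cls_of_nf_class_nf)

lemma class_nf_A_add: "class_nf N (A_add N P Q) = class_nf N P + class_nf N Q"
  unfolding A_add_def class_nf_cls by (simp add: nf_add class_nf_def)

lemma class_nf_A_mult: "class_nf N (A_mult N P Q) = nf_times N (class_nf N P) (class_nf N Q)"
  unfolding A_mult_def class_nf_cls by (simp add: nf_mult class_nf_def)

lemma class_nf_A_scale: "class_nf N (A_scale N c P) = smult [:c:] (class_nf N P)"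
  unfolding A_scale_def class_nf_cls by (simp add: nf_fscal_mult class_nf_def)

lemma class_nf_A_x: "class_nf N (A_x N) = [:[:0, 1:]:]"
  by (simp add: A_x_def class_nf_cls nf_fx)

lemma class_nf_A_y: "class_nf N (A_y N) = [:0, 1:]"
  by (simp add: A_y_def class_nf_cls nf_fy)

lemma class_nf_A_poly: "class_nf N (A_poly N f) = [:f:]"
  by (simp add: A_poly_def class_nf_cls nf_fpoly)

lemma is_alg_aut_bij_betw: "is_alg_aut N \<sigma> \<Longrightarrow> bij_betw \<sigma> (A N) (A N)"
  by (simp add: is_alg_aut_def Bij_def)

lemma is_alg_aut_extensional: "is_alg_aut N \<sigma> \<Longrightarrow> \<sigma> \<in> extensional (A N)"
  by (simp add: is_alg_aut_def Bij_def)

lemma is_alg_aut_in_A: "is_alg_aut N \<sigma> \<Longrightarrow> P \<in> A N \<Longrightarrow> \<sigma> P \<in> A N"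
  using is_alg_aut_bij_betw bij_betwE by blast

lemma is_alg_aut_add:
  "is_alg_aut N \<sigma> \<Longrightarrow> P \<in> A N \<Longrightarrow> Q \<in> A N \<Longrightarrow> \<sigma> (A_add N P Q) = A_add N (\<sigma> P) (\<sigma> Q)"
  by (simp add: is_alg_aut_def)

lemma is_alg_aut_mult:
  "is_alg_aut N \<sigma> \<Longrightarrow> P \<in> A N \<Longrightarrow> Q \<in> A N \<Longrightarrow> \<sigma> (A_mult N P Q) = A_mult N (\<sigma> P) (\<sigma> Q)"
  by (simp add: is_alg_aut_def)

lemma is_alg_aut_scale: "is_alg_aut N \<sigma> \<Longrightarrow> P \<in> A N \<Longrightarrow> \<sigma> (A_scale N c P) = A_scale N c (\<sigma> P)"
  by (simp add: is_alg_aut_def)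

lemma is_alg_aut_one: "is_alg_aut N \<sigma> \<Longrightarrow> \<sigma> (A_one N) = A_one N"
  by (simp add: is_alg_aut_def)

definition nf_aut_of ::
  "nat \<Rightarrow> ('k::field_char_0 free_alg set \<Rightarrow> 'k free_alg set) \<Rightarrow> 'k poly poly \<Rightarrow> 'k poly poly"
  where "nf_aut_of N \<sigma> R = class_nf N (\<sigma> (cls N (of_nf R)))"

lemma class_nf_alg_aut:
  "is_alg_aut N \<sigma> \<Longrightarrow> P \<in> A N \<Longrightarrow> class_nf N (\<sigma> P) = nf_aut_of N \<sigma> (class_nf N P)"
  by (simp add: nf_aut_of_def cls_of_nf_class_nf)

lemma bij_nf_aut_of:
  assumes \<sigma>: "is_alg_aut N \<sigma>"
  shows "bij (nf_aut_of N \<sigma>)"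
proof (rule bijI)
  have b: "bij_betw \<sigma> (A N) (A N)" by (rule is_alg_aut_bij_betw[OF \<sigma>])
  show "inj (nf_aut_of N \<sigma>)"
  proof (rule injI)
    fix R R' assume "nf_aut_of N \<sigma> R = nf_aut_of N \<sigma> R'"
    then have "\<sigma> (cls N (of_nf R)) = \<sigma> (cls N (of_nf R'))"
      unfolding nf_aut_of_def by (rule class_nf_inj[OF is_alg_aut_in_A[OF \<sigma> cls_in_A] is_alg_aut_in_A[OF \<sigma> cls_in_A]])
    then have "cls N (of_nf R) = cls N (of_nf R')"
      using b by (auto simp: bij_betw_def dest: inj_onD)
    then show "R = R'" by (simp add: cls_eq_iff_nf_eq nf_of_nf)
  qed
  have "R \<in> range (nf_aut_of N \<sigma>)" for R
  proof -
    obtain P where "P \<in> A N" "\<sigma> P = cls N (of_nf R)"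
      using b by (metis bij_betw_iff_bijections cls_in_A)
    then have "nf_aut_of N \<sigma> (class_nf N P) = R"
      by (simp add: nf_aut_of_def cls_of_nf_class_nf class_nf_cls nf_of_nf)
    then show ?thesis by (metis rangeI)
  qed
  then show "surj (nf_aut_of N \<sigma>)" by auto
qed

lemma nf_aut_nf_aut_of:
  assumes \<sigma>: "is_alg_aut N \<sigma>"
  shows "nf_aut N (nf_aut_of N \<sigma>)"
  unfolding nf_aut_def
proof (intro conjI allI)
  show "bij (nf_aut_of N \<sigma>)" by (rule bij_nf_aut_of[OF \<sigma>])
  show "nf_aut_of N \<sigma> (P + Q) = nf_aut_of N \<sigma> P + nf_aut_of N \<sigma> Q" for P Q
    using is_alg_aut_add[OF \<sigma>, of "cls N (of_nf P)" "cls N (of_nf Q)"]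
    by (simp add: nf_aut_of_def of_nf_add A_add_cls class_nf_A_add)
  show "nf_aut_of N \<sigma> (nf_times N P Q) = nf_times N (nf_aut_of N \<sigma> P) (nf_aut_of N \<sigma> Q)" for P Q
  proof -
    have "cls N (of_nf (nf_times N P Q)) = A_mult N (cls N (of_nf P)) (cls N (of_nf Q))"
      by (simp add: A_mult_cls cls_eq_iff_nf_eq nf_of_nf nf_times_def)
    then show ?thesis by (simp add: nf_aut_of_def is_alg_aut_mult[OF \<sigma>] class_nf_A_mult)
  qed
  show "nf_aut_of N \<sigma> (smult [:c:] P) = smult [:c:] (nf_aut_of N \<sigma> P)" for c P
    using is_alg_aut_scale[OF \<sigma>, of "cls N (of_nf P)" c]
    by (simp add: nf_aut_of_def of_nf_smult_const A_scale_cls class_nf_A_scale)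
  show "nf_aut_of N \<sigma> 1 = 1"
    using is_alg_aut_one[OF \<sigma>] by (simp add: nf_aut_of_def A_one_def class_nf_cls)
qed

theorem alg_aut_is_phi:
  assumes \<sigma>: "is_alg_aut N \<sigma>" and N: "N \<ge> 1"
  obtains f l where "l \<noteq> (0::'k::field_char_0)" "is_phi N f l \<sigma>"
proof -
  obtain l f where l: "l \<noteq> (0::'k)" and x: "nf_aut_of N \<sigma> [:[:0, 1:]:] = [:[:0, l:]:]"
    and y: "nf_aut_of N \<sigma> [:0, 1:] = [:f, [:l ^ (N - 1):]:]"
    by (rule nf_aut_generators[OF nf_aut_nf_aut_of[OF \<sigma>] N])
  have "\<sigma> (A_x N) = A_scale N l (A_x N)"
    by (rule class_nf_inj[where N=N])
       (simp_all add: is_alg_aut_in_A[OF \<sigma>] class_nf_alg_aut[OF \<sigma>] class_nf_A_x x class_nf_A_scale)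
  moreover have "\<sigma> (A_y N) = A_add N (A_scale N (l ^ (N - 1)) (A_y N)) (A_poly N f)"
    by (rule class_nf_inj[where N=N])
       (simp_all add: is_alg_aut_in_A[OF \<sigma>] class_nf_alg_aut[OF \<sigma>] class_nf_A_y y class_nf_A_scale
         class_nf_A_add class_nf_A_poly)
  ultimately show thesis using \<sigma> l by (intro that[of l f]) (auto simp: is_phi_def)
qed

lemma alg_aut_eq_on_words:
  fixes \<sigma>1 \<sigma>2 :: "'k::field_char_0 free_alg set \<Rightarrow> 'k free_alg set"
  assumes \<sigma>1: "is_alg_aut N \<sigma>1" and \<sigma>2: "is_alg_aut N \<sigma>2"
    and x: "\<sigma>1 (A_x N) = \<sigma>2 (A_x N)" and y: "\<sigma>1 (A_y N) = \<sigma>2 (A_y N)"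
  shows "\<sigma>1 (cls N (Poly_Mapping.single (W bs) (1::'k))) = \<sigma>2 (cls N (Poly_Mapping.single (W bs) 1))"
proof (induction bs)
  case Nil
  have "cls N (Poly_Mapping.single (W []) (1::'k)) = A_one N"
    by (simp add: A_one_def flip: one_free_alg_eq_single)
  then show ?case by (simp add: is_alg_aut_one[OF \<sigma>1] is_alg_aut_one[OF \<sigma>2])
next
  case (Cons b bs)
  let ?g = "if b then A_y N else A_x N"
  have "cls N (Poly_Mapping.single (W (b # bs)) (1::'k)) = A_mult N ?g (cls N (Poly_Mapping.single (W bs) 1))"
    by (simp add: single_Cons_word A_mult_cls letter_def A_x_def A_y_def)
  moreover have "\<sigma>1 ?g = \<sigma>2 ?g" "?g \<in> A N" using x y by simp_all
  ultimately show ?case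
    by (simp add: is_alg_aut_mult[OF \<sigma>1] is_alg_aut_mult[OF \<sigma>2] Cons.IH)
qed

theorem alg_aut_eqI:
  fixes \<sigma>1 \<sigma>2 :: "'k::field_char_0 free_alg set \<Rightarrow> 'k free_alg set"
  assumes \<sigma>1: "is_alg_aut N \<sigma>1" and \<sigma>2: "is_alg_aut N \<sigma>2"
    and x: "\<sigma>1 (A_x N) = \<sigma>2 (A_x N)" and y: "\<sigma>1 (A_y N) = \<sigma>2 (A_y N)"
  shows "\<sigma>1 = \<sigma>2"
proof
  fix P
  have "\<sigma>1 (cls N p) = \<sigma>2 (cls N p)" for p :: "'k free_alg"
  proof (induction p rule: poly_mapping_single_induct)
    case zero
    have "cls N 0 = A_scale N 0 (A_one N)" by (simp add: A_one_def A_scale_cls)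
    show ?case unfolding \<open>cls N 0 = A_scale N 0 (A_one N)\<close>
      by (simp add: is_alg_aut_scale[OF \<sigma>1] is_alg_aut_scale[OF \<sigma>2] is_alg_aut_one[OF \<sigma>1]
          is_alg_aut_one[OF \<sigma>2])
  next
    case (single w c p)
    obtain bs where w: "w = W bs" by (cases w)
    have "cls N (Poly_Mapping.single w c + p)
        = A_add N (A_scale N c (cls N (Poly_Mapping.single w 1))) (cls N p)"
      by (simp add: A_add_cls A_scale_cls flip: single_eq_fscal_mult)
    then show ?case
      using single.IH alg_aut_eq_on_words[OF \<sigma>1 \<sigma>2 x y, of bs] w
      by (simp add: is_alg_aut_add[OF \<sigma>1] is_alg_aut_add[OF \<sigma>2] is_alg_aut_scale[OF \<sigma>1]
          is_alg_aut_scale[OF \<sigma>2])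
  qed
  then show "\<sigma>1 P = \<sigma>2 P"
    using is_alg_aut_extensional[OF \<sigma>1] is_alg_aut_extensional[OF \<sigma>2]
    by (cases "P \<in> A N") (auto elim: A_cases simp: extensional_def)
qed

section \<open>Substitution automorphisms\<close>

definition subst_x :: "'k::field_char_0 \<Rightarrow> 'k free_alg" where
  "subst_x l = fscal l * fx"

definition subst_y :: "nat \<Rightarrow> 'k::field_char_0 poly \<Rightarrow> 'k \<Rightarrow> 'k free_alg" where
  "subst_y N f l = fscal (l ^ (N - 1)) * fy + fpoly f"

fun subst_word :: "nat \<Rightarrow> 'k::field_char_0 poly \<Rightarrow> 'k \<Rightarrow> word \<Rightarrow> 'k free_alg" where
  "subst_word N f l (W bs) = foldr (\<lambda>b acc. (if b then subst_y N f l else subst_x l) * acc) bs 1"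

definition free_subst :: "nat \<Rightarrow> 'k::field_char_0 poly \<Rightarrow> 'k \<Rightarrow> 'k free_alg \<Rightarrow> 'k free_alg" where
  "free_subst N f l p = lin_ext (\<lambda>c q. fscal c * q) (subst_word N f l) p"

lemma free_subst_single: "free_subst N f l (Poly_Mapping.single w c) = fscal c * subst_word N f l w"
  unfolding free_subst_def by (rule lin_ext_single) simp

lemma free_subst_add: "free_subst N f l (p + q) = free_subst N f l p + free_subst N f l q"
  unfolding free_subst_def by (rule lin_ext_add) (simp_all add: distrib_right flip: fscal_add)

lemma free_subst_0 [simp]: "free_subst N f l 0 = 0"
  by (simp add: free_subst_def)

lemma free_subst_diff: "free_subst N f l (p - q) = free_subst N f l p - free_subst N f l q"
  by (metis free_subst_add diff_add_cancel eq_diff_eq)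

lemma subst_word_append: "subst_word N f l (w + v) = subst_word N f l w * subst_word N f l v"
proof (cases w; cases v)
  fix bs cs assume "w = W bs" "v = W cs"
  then show ?thesis by (induction bs arbitrary: w) (simp_all add: mult.assoc)
qed

lemma free_subst_mult: "free_subst N f l (p * q) = free_subst N f l p * free_subst N f l q"
proof (induction p rule: poly_mapping_single_induct)
  case zero then show ?case by simp
next
  case (single w c p)
  have "free_subst N f l (Poly_Mapping.single w c * q)
      = free_subst N f l (Poly_Mapping.single w c) * free_subst N f l q"
  proof (induction q rule: poly_mapping_single_induct)
    case zero then show ?case by simp
  next
    case (single v d q)
    then show ?case
      by (simp add: distrib_left free_subst_add mult_single free_subst_single subst_word_append
          fscal_mult_mult)
  qed
  with single show ?case by (simp add: distrib_right free_subst_add)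
qed

lemma free_subst_fscal: "free_subst N f l (fscal c) = fscal c"
  by (simp add: fscal_def free_subst_single)

lemma free_subst_1 [simp]: "free_subst N f l 1 = 1"
  using free_subst_fscal[of N f l 1] by simp

lemma free_subst_power: "free_subst N f l (p ^ n) = free_subst N f l p ^ n"
  by (induction n) (simp_all add: free_subst_mult)

lemma free_subst_fscal_mult: "free_subst N f l (fscal c * p) = fscal c * free_subst N f l p"
  by (simp add: free_subst_mult free_subst_fscal)

lemma free_subst_fx: "free_subst N f l fx = subst_x l"
  by (simp add: fx_def free_subst_single)

lemma free_subst_fy: "free_subst N f l fy = subst_y N f l"
  by (simp add: fy_def free_subst_single)

lemma free_subst_fpoly: "free_subst N f l (fpoly g) = fpoly (pcompose g [:0, l:])"
  by (induction g)
     (simp_all add: fpoly_pCons free_subst_add free_subst_fscal free_subst_mult free_subst_fx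
       pcompose_pCons fpoly_add fpoly_mult fpoly_linear subst_x_def mult.assoc fpoly_smult
       fscal_mult_fx_mult)

lemma free_subst_relator:
  assumes N: "N \<ge> 1"
  shows "free_subst N f l (relator N) = fscal (l ^ N) * relator N"
proof -
  let ?a = "l ^ (N - 1)" and ?F = "fpoly f"
  have al: "?a * l = l ^ N" "l * ?a = l ^ N" using N by (cases N; simp)+
  have yx: "subst_y N f l * subst_x l = fscal (l ^ N) * (fy * fx) + fscal l * (?F * fx)"
  proof -
    have "subst_y N f l * subst_x l = fscal ?a * fy * (fscal l * fx) + ?F * (fscal l * fx)"
      unfolding subst_y_def subst_x_def by (rule distrib_right)
    also have "\<dots> = fscal (?a * l) * (fy * fx) + fscal l * (?F * fx)"
      by (simp only: fscal_mult_mult[of ?a fy l fx] mult_fscal_left[of ?F l fx])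
    finally show ?thesis by (simp only: al)
  qed
  have xy: "subst_x l * subst_y N f l = fscal (l ^ N) * (fx * fy) + fscal l * (fx * ?F)"
  proof -
    have "subst_x l * subst_y N f l = fscal l * fx * (fscal ?a * fy) + fscal l * (fx * ?F)"
      unfolding subst_y_def subst_x_def by (simp only: distrib_left mult.assoc)
    also have "\<dots> = fscal (l * ?a) * (fx * fy) + fscal l * (fx * ?F)"
      by (simp only: fscal_mult_mult[of l fx ?a fy])
    finally show ?thesis by (simp only: al)
  qed
  have "free_subst N f l (relator N)
      = subst_y N f l * subst_x l - subst_x l * subst_y N f l - subst_x l ^ N"
    by (simp add: relator_def free_subst_diff free_subst_mult free_subst_fx free_subst_fy
        free_subst_power)
  also have "\<dots> = fscal (l ^ N) * (fy * fx) - fscal (l ^ N) * (fx * fy) - fscal (l ^ N) * fx ^ N"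
    using yx xy fpoly_mult_fx[of f] power_fscal_mult[of l fx N] by (simp add: subst_x_def)
  also have "\<dots> = fscal (l ^ N) * relator N"
    by (simp add: relator_def right_diff_distrib)
  finally show ?thesis .
qed

lemma free_subst_rel_ideal:
  assumes N: "N \<ge> 1"
  shows "p \<in> rel_ideal N \<Longrightarrow> free_subst N f l p \<in> rel_ideal N"
proof (induction rule: rel_ideal.induct)
  case (gen a b)
  have "free_subst N f l (a * relator N * b)
      = (free_subst N f l a * fscal (l ^ N)) * relator N * free_subst N f l b"
    by (simp add: free_subst_mult free_subst_relator[OF N] mult.assoc)
  then show ?case by (metis rel_ideal.gen)
next
  case zero then show ?case by (simp add: rel_ideal.zero)
next
  case (add p q) then show ?case by (simp add: free_subst_add rel_ideal.add)
qed

lemma free_subst_rel_equiv: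
  "N \<ge> 1 \<Longrightarrow> rel_equiv N p q \<Longrightarrow> rel_equiv N (free_subst N f l p) (free_subst N f l q)"
  unfolding rel_equiv_def by (metis free_subst_diff free_subst_rel_ideal)

lemma free_subst_subst_x: "free_subst N f l (subst_x m) = subst_x (l * m)"
  by (simp add: subst_x_def free_subst_fscal_mult free_subst_fx fscal_mult_mult[of m 1 l fx, simplified]
      mult.commute)

lemma free_subst_subst_y:
  "free_subst N f l (subst_y N g m) = subst_y N (smult (m ^ (N - 1)) f + pcompose g [:0, l:]) (l * m)"
proof -
  have "free_subst N f l (subst_y N g m)
      = fscal (m ^ (N - 1)) * (fscal (l ^ (N - 1)) * fy + fpoly f) + fpoly (pcompose g [:0, l:])"
    by (simp add: subst_y_def free_subst_add free_subst_fscal_mult free_subst_fy free_subst_fpoly)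
  then show ?thesis
    by (simp add: subst_y_def distrib_left fpoly_add fpoly_smult fscal_mult_fscal_mult
        power_mult_distrib ac_simps)
qed

lemma free_subst_free_subst:
  "free_subst N f l (free_subst N g m p)
    = free_subst N (smult (m ^ (N - 1)) f + pcompose g [:0, l:]) (l * m) p"
proof -
  have word: "free_subst N f l (subst_word N g m w)
      = subst_word N (smult (m ^ (N - 1)) f + pcompose g [:0, l:]) (l * m) w" for w
  proof (cases w)
    case (W bs)
    show ?thesis unfolding W
      by (induction bs) (auto simp: free_subst_mult free_subst_subst_y free_subst_subst_x)
  qed
  show ?thesis
    by (induction p rule: poly_mapping_single_induct)
       (simp_all add: free_subst_add free_subst_single free_subst_fscal_mult word)
qed

lemma free_subst_id: "free_subst N 0 1 p = (p :: 'k::field_char_0 free_alg)"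
proof -
  have word: "subst_word N 0 1 w = Poly_Mapping.single w (1::'k)" for w
  proof (cases w)
    case (W bs)
    show ?thesis unfolding W
      by (induction bs)
         (simp_all add: single_Cons_word letter_def subst_x_def subst_y_def
           flip: one_free_alg_eq_single)
  qed
  show ?thesis
    by (induction p rule: poly_mapping_single_induct)
       (simp_all add: free_subst_add free_subst_single word fscal_mult_single)
qed

definition subst_aut :: "nat \<Rightarrow> 'k::field_char_0 poly \<Rightarrow> 'k \<Rightarrow> 'k free_alg set \<Rightarrow> 'k free_alg set" where
  "subst_aut N f l = restrict (\<lambda>P. cls N (free_subst N f l (rep P))) (A N)"

lemma subst_aut_cls: "N \<ge> 1 \<Longrightarrow> subst_aut N f l (cls N p) = cls N (free_subst N f l p)"
  unfolding subst_aut_def by (simp add: cls_eq_iff free_subst_rel_equiv rel_equiv_rep_cls)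

lemma subst_aut_in_A: "P \<in> A N \<Longrightarrow> subst_aut N f l P \<in> A N"
  by (simp add: subst_aut_def)

lemma compose_subst_aut:
  assumes N: "N \<ge> 1"
  shows "compose (A N) (subst_aut N f l) (subst_aut N g m)
    = subst_aut N (smult (m ^ (N - 1)) f + pcompose g [:0, l:]) (l * m)"
proof
  fix P
  show "compose (A N) (subst_aut N f l) (subst_aut N g m) P
      = subst_aut N (smult (m ^ (N - 1)) f + pcompose g [:0, l:]) (l * m) P"
  proof (cases "P \<in> A N")
    case True
    then show ?thesis
      by (elim A_cases) (simp add: compose_def subst_aut_cls[OF N] free_subst_free_subst)
  qed (simp add: compose_def subst_aut_def)
qed

lemma subst_aut_id: "N \<ge> 1 \<Longrightarrow> P \<in> A N \<Longrightarrow> subst_aut N 0 (1::'k::field_char_0) P = P"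
  by (elim A_cases) (simp add: subst_aut_cls free_subst_id)

lemma pcompose_linear_linear: "pcompose (pcompose f [:0, a:]) [:0, b:] = pcompose f [:0, a * (b::'k::field):]"
  by (simp add: pcompose_assoc[symmetric] pcompose_pCons)

lemma subst_aut_inverse:
  fixes f :: "'k::field_char_0 poly"
  assumes N: "N \<ge> 1" and l: "l \<noteq> 0" and P: "P \<in> A N"
  defines "g \<equiv> smult (- (inverse l ^ (N - 1))) (pcompose f [:0, inverse l:])"
  shows "subst_aut N f l (subst_aut N g (inverse l) P) = P"
    and "subst_aut N g (inverse l) (subst_aut N f l P) = P"
proof -
  have "pcompose g [:0, l:] = smult (- (inverse l ^ (N - 1))) f"
    unfolding g_def by (simp only: pcompose_smult pcompose_linear_linear) (simp add: l)
  then have "compose (A N) (subst_aut N f l) (subst_aut N g (inverse l)) = subst_aut N 0 1"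
    by (simp add: compose_subst_aut[OF N] l power_mult_distrib[symmetric] flip: power_inverse)
  then show "subst_aut N f l (subst_aut N g (inverse l) P) = P"
    using P by (metis compose_eq subst_aut_id[OF N])
  have "smult (l ^ (N - 1)) g = - pcompose f [:0, inverse l:]"
    unfolding g_def using l by (simp add: power_mult_distrib[symmetric] flip: power_inverse)
  then have "compose (A N) (subst_aut N g (inverse l)) (subst_aut N f l) = subst_aut N 0 1"
    by (simp add: compose_subst_aut[OF N] l pcompose_smult pcompose_linear_linear)
  then show "subst_aut N g (inverse l) (subst_aut N f l P) = P"
    using P by (metis compose_eq subst_aut_id[OF N])
qed

lemma subst_aut_is_alg_aut:
  assumes N: "N \<ge> 1" and l: "l \<noteq> 0"
  shows "is_alg_aut N (subst_aut N f l)"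
  unfolding is_alg_aut_def
proof (intro conjI ballI allI)
  have "bij_betw (subst_aut N f l) (A N) (A N)"
    by (rule bij_betwI[OF _ _ subst_aut_inverse(2)[OF N l] subst_aut_inverse(1)[OF N l]])
       (simp_all add: subst_aut_in_A)
  then show "subst_aut N f l \<in> Bij (A N)"
    by (simp add: Bij_def subst_aut_def)
  show "subst_aut N f l (A_add N P Q) = A_add N (subst_aut N f l P) (subst_aut N f l Q)"
    if "P \<in> A N" "Q \<in> A N" for P Q
    using that by (elim A_cases) (simp add: A_add_cls subst_aut_cls[OF N] free_subst_add)
  show "subst_aut N f l (A_mult N P Q) = A_mult N (subst_aut N f l P) (subst_aut N f l Q)"
    if "P \<in> A N" "Q \<in> A N" for P Q
    using that by (elim A_cases) (simp add: A_mult_cls subst_aut_cls[OF N] free_subst_mult)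
  show "subst_aut N f l (A_scale N c P) = A_scale N c (subst_aut N f l P)" if "P \<in> A N" for c P
    using that by (elim A_cases) (simp add: A_scale_cls subst_aut_cls[OF N] free_subst_fscal_mult)
  show "subst_aut N f l (A_one N) = A_one N"
    by (simp add: A_one_def subst_aut_cls[OF N])
qed

lemma subst_aut_is_phi:
  assumes N: "N \<ge> 1" and l: "l \<noteq> 0"
  shows "is_phi N f l (subst_aut N f l)"
  unfolding is_phi_def
  by (simp add: subst_aut_is_alg_aut[OF N l] A_x_def A_y_def A_poly_def subst_aut_cls[OF N]
      free_subst_fx free_subst_fy subst_x_def subst_y_def A_scale_cls A_add_cls)

lemma is_phi_unique:
  fixes \<sigma>1 \<sigma>2 :: "'k::field_char_0 free_alg set \<Rightarrow> 'k free_alg set"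
  shows "is_phi N f l \<sigma>1 \<Longrightarrow> is_phi N f l \<sigma>2 \<Longrightarrow> \<sigma>1 = \<sigma>2"
  unfolding is_phi_def by (intro alg_aut_eqI) auto

lemma phi_eq_subst_aut:
  assumes N: "N \<ge> 1" and l: "l \<noteq> (0::'k::field_char_0)"
  shows "phi N f l = subst_aut N f l"
  unfolding phi_def
proof (rule the_equality)
  show "is_phi N f l (subst_aut N f l)" by (rule subst_aut_is_phi[OF N l])
qed (rule is_phi_unique[OF _ subst_aut_is_phi[OF N l]])

section \<open>The isomorphism \<open>\<Bbbk>[x] \<bowtie> \<Bbbk>\<^sup>\<times> \<cong> Aut(A\<^sub>N)\<close>\<close>

lemma carrier_bowtie: "carrier (bowtie N) = {(f, l). l \<noteq> 0}"
  by (simp add: bowtie_def)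

lemma mult_bowtie:
  "(f, l) \<otimes>\<^bsub>bowtie N\<^esub> (g, m) = (smult (m ^ (N - 1)) f + pcompose g [:0, l:], l * m)"
  by (simp add: bowtie_def)

lemma carrier_Aut_group: "carrier (Aut_group N) = {\<phi>. is_alg_aut N \<phi>}"
  by (simp add: Aut_group_def BijGroup_def)

lemma mult_Aut_group:
  "a \<in> Bij (A N) \<Longrightarrow> b \<in> Bij (A N) \<Longrightarrow> a \<otimes>\<^bsub>Aut_group N\<^esub> b = compose (A N) a b"
  by (simp add: Aut_group_def BijGroup_def)

lemma phi_generators:
  assumes "N \<ge> 1" "l \<noteq> (0::'k::field_char_0)"
  shows "class_nf N (phi N f l (A_x N)) = [:[:0, l:]:]"
    and "class_nf N (phi N f l (A_y N)) = [:f, [:l ^ (N - 1):]:]"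
  using subst_aut_is_phi[OF assms, of f]
  by (simp_all add: phi_eq_subst_aut[OF assms] is_phi_def class_nf_A_add class_nf_A_scale class_nf_A_x
      class_nf_A_y class_nf_A_poly)

lemma phi_hom:
  assumes N: "N \<ge> 1"
  shows "(\<lambda>(f :: 'k::field_char_0 poly, l). phi N f l) \<in> hom (bowtie N) (Aut_group N)"
proof (rule homI)
  fix x :: "'k poly \<times> 'k" assume "x \<in> carrier (bowtie N)"
  then obtain f l where "x = (f, l)" "l \<noteq> 0" by (auto simp: carrier_bowtie)
  then show "(case x of (f, l) \<Rightarrow> phi N f l) \<in> carrier (Aut_group N)"
    by (simp add: carrier_Aut_group phi_eq_subst_aut[OF N] subst_aut_is_alg_aut[OF N])
next
  fix x y :: "'k poly \<times> 'k" assume "x \<in> carrier (bowtie N)" "y \<in> carrier (bowtie N)"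
  then obtain f l g m where x: "x = (f, l)" "l \<noteq> 0" and y: "y = (g, m)" "m \<noteq> 0"
    by (auto simp: carrier_bowtie)
  have "phi N f l \<in> Bij (A N)" "phi N g m \<in> Bij (A N)"
    using subst_aut_is_alg_aut[OF N x(2), of f] subst_aut_is_alg_aut[OF N y(2), of g]
    by (simp_all add: phi_eq_subst_aut[OF N] x y is_alg_aut_def)
  then show "(case x \<otimes>\<^bsub>bowtie N\<^esub> y of (f, l) \<Rightarrow> phi N f l)
      = (case x of (f, l) \<Rightarrow> phi N f l) \<otimes>\<^bsub>Aut_group N\<^esub> (case y of (f, l) \<Rightarrow> phi N f l)"
    using x y by (simp add: mult_bowtie mult_Aut_group phi_eq_subst_aut[OF N] compose_subst_aut[OF N])
qed

lemma inj_on_phi: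
  assumes N: "N \<ge> 1"
  shows "inj_on (\<lambda>(f :: 'k::field_char_0 poly, l). phi N f l) (carrier (bowtie N))"
proof (rule inj_onI)
  fix x y :: "'k poly \<times> 'k"
  assume "x \<in> carrier (bowtie N)" "y \<in> carrier (bowtie N)"
    and eq: "(case x of (f, l) \<Rightarrow> phi N f l) = (case y of (f, l) \<Rightarrow> phi N f l)"
  then obtain f l g m where x: "x = (f, l)" "l \<noteq> 0" and y: "y = (g, m)" "m \<noteq> 0"
    by (auto simp: carrier_bowtie)
  then have "phi N f l = phi N g m" using eq by simp
  then show "x = y"
    using phi_generators[OF N x(2), of f] phi_generators[OF N y(2), of g] x y by auto
qed

lemma image_phi:
  assumes N: "N \<ge> 1"
  shows "(\<lambda>(f :: 'k::field_char_0 poly, l). phi N f l) ` carrier (bowtie N) = carrier (Aut_group N)"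
proof
  show "(\<lambda>(f :: 'k poly, l). phi N f l) ` carrier (bowtie N) \<subseteq> carrier (Aut_group N)"
    by (rule hom_carrier[OF phi_hom[OF N]])
  show "carrier (Aut_group N) \<subseteq> (\<lambda>(f :: 'k poly, l). phi N f l) ` carrier (bowtie N)"
  proof
    fix \<sigma> :: "'k free_alg set \<Rightarrow> 'k free_alg set"
    assume "\<sigma> \<in> carrier (Aut_group N)"
    then obtain f l where l: "l \<noteq> (0::'k)" and "is_phi N f l \<sigma>"
      by (auto simp: carrier_Aut_group elim: alg_aut_is_phi[OF _ N])
    then have "\<sigma> = phi N f l"
      by (simp add: phi_eq_subst_aut[OF N l] is_phi_unique subst_aut_is_phi[OF N l])
    with l show "\<sigma> \<in> (\<lambda>(f, l). phi N f l) ` carrier (bowtie N)"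
      by (auto simp: carrier_bowtie)
  qed
qed

theorem proposition2p4:
  fixes N :: nat
  assumes "N \<ge> 1"
  shows "(\<forall>(f :: 'k::field_char_0 poly) (l :: 'k). l \<noteq> 0 \<longrightarrow> (\<exists>!\<phi>. is_phi N f l \<phi>))
    \<and> (\<lambda>(f :: 'k poly, l). phi N f l) \<in> iso (bowtie N) (Aut_group N)"
proof (intro conjI allI impI)
  fix f :: "'k poly" and l :: 'k
  assume "l \<noteq> 0"
  with assms show "\<exists>!\<phi>. is_phi N f l \<phi>"
    by (blast intro: subst_aut_is_phi is_phi_unique)
next
  show "(\<lambda>(f :: 'k poly, l). phi N f l) \<in> iso (bowtie N) (Aut_group N)"
    using phi_hom[OF assms] inj_on_phi[OF assms] image_phi[OF assms]
    by (simp add: iso_def bij_betw_def)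
qed

end
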